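(* Let $\varepsilon>0$ and let $f(x,t,n,p,q,r)$ be a continuous real function. Consider, for $t_0\ge0$, the problem $$-\varepsilon u_{xxt}+u_{tt}-u_{xx}=f(x,t,u,u_x,u_{xx},u_t),\quad x\in(0,1),\ t>t_0,\qquad u(0,t)=u(1,t)=0,$$ with $u(x,t_0)=u_0(x)$, $u_t(x,t_0)=u_1(x)$, where $u_0(0)=u_0(1)=u_1(0)=u_1(1)=0$. Assume that for every $t\ge0$ and every $(\varphi,\psi)\in\Gamma$ $$\Big(\frac{\varepsilon}{2}+\frac{2}{\varepsilon}\Big)\int_0^1 f(x,t,\varphi,\varphi_x,\varphi_{xx},\psi)^2dx\le g(t)\,c_1^2\,d^2(\varphi,\psi)+\tilde g_1\big(t,d^2(\varphi,\psi)\big)+\tilde g_2\big(t,d^2(\varphi,\psi)\big),$$ where $g:[0,\infty)\to[0,\infty)$ and $\tilde g_1,\tilde g_2:[0,\infty)\times(0,\infty)\to[0,\infty)$ are continuous functions, each $\tilde g_i$ non-decreasing in its second argument, such that: (i) there is $\sigma>0$ with $\int_{t_0}^t g(\tau)\,d\tau-p(t-t_0)\le\sigma$ for all $t\ge t_0\ge 0$; (ii) there are constants $\chi\in[0,1]$, $\kappa\in[0,1]$, $q\ge 0$ (with $q<p$ if $\chi=1$) and $M>0$ such that $\left|\frac{\int_0^t g(\tau)d\tau}{1+t^{\chi}}-q\right|<\frac{M}{1+t^{\kappa}}$ for all $t\ge0$; (iii) for every $\eta>0$, $\lim_{t\to+\infty}\tilde g_1(t,\eta)e^{\xi(t^{\chi}-t^{\kappa})}=0$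 and $\int_0^\infty \tilde g_2(\tau,\eta)e^{\xi(\tau^{\chi}-\tau^{\kappa})}d\tau<+\infty$, where $\xi$ is some positive constant if $\chi>\kappa$ and $\xi=0$ if $\chi\le\kappa$. Then the solutions of this problem are eventually uniformly bounded, and the origin is eventually quasi-uniform-asymptotically stable in the large, both with respect to the distance $d$.
   Context: $\omega_1:=\frac{\pi^4}{1+\pi^4}$, $\omega_2:=\frac{\pi^4}{1+\pi^2+\pi^4}$, $c_1^2:=\min\{\varepsilon^2\omega_1/8,1/4\}$, $c_2^2:=\max\{\varepsilon(1+\varepsilon)/2,(2+\varepsilon)/2\}$, $c_3^2:=\frac{\omega_2}{2}\varepsilon$, $p:=c_3^2/c_2^2$. $\Gamma:=\{(\varphi,\psi):\varphi\in C^2([0,1]),\ \psi\in C([0,1]),\ \varphi(0)=\varphi(1)=\psi(0)=\psi(1)=0\}$ and $d^2(\varphi,\psi):=\int_0^1(\varphi^2+\varphi_x^2+\varphi_{xx}^2+\psi^2)dx$; for a solution $u$ write $d(t):=d(u(\cdot,t),u_t(\cdot,t))$ (solutions are considered as defined for all $t\ge t_0$). Eventually uniformly bounded: for every $\alpha>0$ there exist $s(\alpha)\ge0$ and $\beta(\alpha)>0$ such that $t_0\ge s(\alpha)$ and $d(u_0,u_1)\le\alpha$ imply $d(t)<\beta(\alpha)$ for all $t\ge t_0$. Origin eventually quasi-uniform-asymptotically stable in the large: for every $\rho,\alpha>0$ there exist $s(\alpha)\ge0$ and $\hat T(\rho,\alpha)>0$ such that $d(u_0,u_1)\le\alpha$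 and $t_0\ge s(\alpha)$ imply $d(t)<\rho$ for all $t\ge t_0+\hat T$. *)

theory Defs
  imports "HOL-Analysis.Analysis"
begin

definition omega1 :: real where "omega1 = pi^4 / (1 + pi^4)"
definition omega2 :: real where "omega2 = pi^4 / (1 + pi^2 + pi^4)"

definition c1sq :: "real \<Rightarrow> real" where
  "c1sq \<epsilon> = min (\<epsilon>^2 * omega1 / 8) (1/4)"
definition c2sq :: "real \<Rightarrow> real" where
  "c2sq \<epsilon> = max (\<epsilon> * (1 + \<epsilon>) / 2) ((2 + \<epsilon>) / 2)"
definition c3sq :: "real \<Rightarrow> real" where
  "c3sq \<epsilon> = omega2 / 2 * \<epsilon>"
definition pconst :: "real \<Rightarrow> real" where
  "pconst \<epsilon> = c3sq \<epsilon> / c2sq \<epsilon>"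

text \<open>Real power t^a for t >= 0 with the convention 0^0 = 1
  (Isabelle's powr has 0 powr 0 = 0).\<close>
definition tpow :: "real \<Rightarrow> real \<Rightarrow> real" where
  "tpow t a = (if t = 0 then (if a = 0 then 1 else 0) else t powr a)"

text \<open>Membership in Gamma, with the derivatives phi', phi'' given explicitly
  (one-sided at the endpoints of [0,1]).\<close>
definition in_Gamma ::
  "(real \<Rightarrow> real) \<Rightarrow> (real \<Rightarrow> real) \<Rightarrow> (real \<Rightarrow> real) \<Rightarrow> (real \<Rightarrow> real) \<Rightarrow> bool" where
  "in_Gamma \<phi> \<phi>' \<phi>'' \<psi> \<longleftrightarrow>
     (\<forall>x\<in>{0..1}. (\<phi> has_real_derivative \<phi>' x) (at x within {0..1})) \<and>
     (\<forall>x\<in>{0..1}. (\<phi>' has_real_derivative \<phi>'' x) (at x within {0..1})) \<and>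
     continuous_on {0..1} \<phi>'' \<and> continuous_on {0..1} \<psi> \<and>
     \<phi> 0 = 0 \<and> \<phi> 1 = 0 \<and> \<psi> 0 = 0 \<and> \<psi> 1 = 0"

definition dsq ::
  "(real \<Rightarrow> real) \<Rightarrow> (real \<Rightarrow> real) \<Rightarrow> (real \<Rightarrow> real) \<Rightarrow> (real \<Rightarrow> real) \<Rightarrow> real" where
  "dsq \<phi> \<phi>' \<phi>'' \<psi> = integral {0..1} (\<lambda>x. (\<phi> x)^2 + (\<phi>' x)^2 + (\<phi>'' x)^2 + (\<psi> x)^2)"

definition is_solution ::
  "real \<Rightarrow> (real \<Rightarrow> real \<Rightarrow> real \<Rightarrow> real \<Rightarrow> real \<Rightarrow> real \<Rightarrow> real) \<Rightarrow> real \<Rightarrow>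
   (real \<Rightarrow> real \<Rightarrow> real) \<Rightarrow> (real \<Rightarrow> real \<Rightarrow> real) \<Rightarrow> (real \<Rightarrow> real \<Rightarrow> real) \<Rightarrow>
   (real \<Rightarrow> real \<Rightarrow> real) \<Rightarrow> (real \<Rightarrow> real \<Rightarrow> real) \<Rightarrow> (real \<Rightarrow> real \<Rightarrow> real) \<Rightarrow>
   (real \<Rightarrow> real \<Rightarrow> real) \<Rightarrow> bool" where
  "is_solution \<epsilon> f t0 u ux uxx ut uxt uxxt utt \<longleftrightarrow>
     (\<forall>w \<in> {u, ux, uxx, ut, uxt, uxxt, utt}.
        continuous_on ({0..1} \<times> {t0..}) (\<lambda>(x, t). w x t)) \<and>
     (\<forall>t\<ge>t0. \<forall>x\<in>{0..1}.
        ((\<lambda>y. u y t) has_real_derivative ux x t) (at x within {0..1}) \<and>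
        ((\<lambda>y. ux y t) has_real_derivative uxx x t) (at x within {0..1}) \<and>
        ((\<lambda>y. ut y t) has_real_derivative uxt x t) (at x within {0..1}) \<and>
        ((\<lambda>y. uxt y t) has_real_derivative uxxt x t) (at x within {0..1}) \<and>
        ((\<lambda>s. u x s) has_real_derivative ut x t) (at t within {t0..}) \<and>
        ((\<lambda>s. ux x s) has_real_derivative uxt x t) (at t within {t0..}) \<and>
        ((\<lambda>s. uxx x s) has_real_derivative uxxt x t) (at t within {t0..}) \<and>
        ((\<lambda>s. ut x s) has_real_derivative utt x t) (at t within {t0..})) \<and>
     (\<forall>t\<ge>t0. u 0 t = 0 \<and> u 1 t = 0) \<and>
     (\<forall>x\<in>{0<..<1}. \<forall>t>t0.
        - \<epsilon> * uxxt x t + utt x t - uxx x t = f x t (u x t) (ux x t) (uxx x t) (ut x t))"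

definition dsol ::
  "(real \<Rightarrow> real \<Rightarrow> real) \<Rightarrow> (real \<Rightarrow> real \<Rightarrow> real) \<Rightarrow> (real \<Rightarrow> real \<Rightarrow> real) \<Rightarrow>
   (real \<Rightarrow> real \<Rightarrow> real) \<Rightarrow> real \<Rightarrow> real" where
  "dsol u ux uxx ut t = sqrt (dsq (\<lambda>x. u x t) (\<lambda>x. ux x t) (\<lambda>x. uxx x t) (\<lambda>x. ut x t))"

definition eventually_uniformly_bounded ::
  "real \<Rightarrow> (real \<Rightarrow> real \<Rightarrow> real \<Rightarrow> real \<Rightarrow> real \<Rightarrow> real \<Rightarrow> real) \<Rightarrow> bool" where
  "eventually_uniformly_bounded \<epsilon> f \<longleftrightarrow>
     (\<forall>\<alpha>>0. \<exists>s\<ge>0. \<exists>\<beta>>0. \<forall>t0 u ux uxx ut uxt uxxt utt.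
        t0 \<ge> s \<longrightarrow> is_solution \<epsilon> f t0 u ux uxx ut uxt uxxt utt \<longrightarrow>
        dsol u ux uxx ut t0 \<le> \<alpha> \<longrightarrow> (\<forall>t\<ge>t0. dsol u ux uxx ut t < \<beta>))"

definition eventually_quasi_uniform_asympt_stable_large ::
  "real \<Rightarrow> (real \<Rightarrow> real \<Rightarrow> real \<Rightarrow> real \<Rightarrow> real \<Rightarrow> real \<Rightarrow> real) \<Rightarrow> bool" where
  "eventually_quasi_uniform_asympt_stable_large \<epsilon> f \<longleftrightarrow>
     (\<forall>\<alpha>>0. \<exists>s\<ge>0. \<forall>\<rho>>0. \<exists>T>0. \<forall>t0 u ux uxx ut uxt uxxt utt.
        t0 \<ge> s \<longrightarrow> is_solution \<epsilon> f t0 u ux uxx ut uxt uxxt utt \<longrightarrow>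
        dsol u ux uxx ut t0 \<le> \<alpha> \<longrightarrow> (\<forall>t\<ge>t0 + T. dsol u ux uxx ut t < \<rho>))"

end

theory Submission
  imports Defs
begin

text \<open>Along a solution, \<open>V = \<integral>\<^sub>0\<^sup>1 u\<^sub>t\<^sup>2 + u\<^sub>x\<^sup>2 + \<epsilon>\<^sup>2/2 u\<^sub>x\<^sub>x\<^sup>2 - \<epsilon> u\<^sub>t u\<^sub>x\<^sub>x\<close> is equivalent
  to \<open>d\<^sup>2\<close>, and integrating by parts with the equation and Poincare's inequality gives
  \<open>V' \<le> (\<epsilon>/2 + 2/\<epsilon>) \<integral> f\<^sup>2 - 32\<epsilon>/73 d\<^sup>2\<close>. As long as \<open>d\<^sup>2 \<le> \<eta>\<close>, the hypothesis on \<open>f\<close> and the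
  monotonicity of \<open>g\<^sub>1, g\<^sub>2\<close> turn this into a linear differential inequality
  \<open>V' \<le> k(t) V + g\<^sub>1(t,\<eta>) + g\<^sub>2(t,\<eta>)\<close>, where by condition (i) \<open>\<integral>\<^sub>\<tau>\<^sup>t k \<le> S - \<delta> (t - \<tau>)\<close> with
  \<open>\<delta> > 0\<close>. By (iii), \<open>g\<^sub>1(\<cdot>,\<eta>)\<close> is eventually small and \<open>g\<^sub>2(\<cdot>,\<eta>)\<close> has small tails, so the
  variation of constants formula keeps \<open>V\<close> below a level fixed by the initial distance for all
  times (a continuous induction, which also justifies \<open>d\<^sup>2 \<le> \<eta>\<close>), and eventually below any
  prescribed level.\<close>

section \<open>One-dimensional integral inequalities\<close>

lemma integral_add_continuous_on:
  "continuous_on {a..b} f \<Longrightarrow> continuous_on {a..b} g \<Longrightarrow>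
    integral {a..b} (\<lambda>x. f x + g x) = integral {a..b} f + integral {a..b} (g :: real \<Rightarrow> real)"
  by (intro integral_add integrable_continuous_interval)

lemma integral_diff_continuous_on:
  "continuous_on {a..b} f \<Longrightarrow> continuous_on {a..b} g \<Longrightarrow>
    integral {a..b} (\<lambda>x. f x - g x) = integral {a..b} f - integral {a..b} (g :: real \<Rightarrow> real)"
  by (intro integral_diff integrable_continuous_interval)

lemmas integral_linear_continuous_on =
  integral_add_continuous_on integral_diff_continuous_on integral_mult_right integral_mult_left

lemma integral_le_continuous_on:
  "continuous_on {a..b} f \<Longrightarrow> continuous_on {a..b} g \<Longrightarrow> (\<And>x. x \<in> {a..b} \<Longrightarrow> f x \<le> g x) \<Longrightarrow>
    integral {a..b} f \<le> integral {a..b} (g :: real \<Rightarrow> real)"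
  by (intro integral_le integrable_continuous_interval)

lemma integral_square_nonneg:
  "continuous_on {a..b} (u :: real \<Rightarrow> real) \<Longrightarrow> 0 \<le> integral {a..b} (\<lambda>x. (u x)^2)"
  by (intro integral_nonneg integrable_continuous_interval continuous_intros) auto

lemma square_increment_le_integral:
  fixes \<phi> \<phi>' :: "real \<Rightarrow> real"
  assumes ab: "a < b"
    and deriv: "\<And>x. x \<in> {a..b} \<Longrightarrow> (\<phi> has_real_derivative \<phi>' x) (at x within {a..b})"
    and cont: "continuous_on {a..b} \<phi>'"
  shows "(\<phi> b - \<phi> a)^2 \<le> (b - a) * integral {a..b} (\<lambda>s. (\<phi>' s)^2)"
proof -
  define m where "m = (\<phi> b - \<phi> a) / (b - a)"
  define J where "J = integral {a..b} (\<lambda>s. (\<phi>' s)^2)"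
  have incr: "\<phi> b - \<phi> a = m * (b - a)"
    using ab by (simp add: m_def)
  have "(\<phi>' has_integral (\<phi> b - \<phi> a)) {a..b}"
    using fundamental_theorem_of_calculus[of a b \<phi> \<phi>'] ab deriv
    by (auto simp: has_real_derivative_iff_has_vector_derivative)
  moreover have "((\<lambda>s. (\<phi>' s)^2) has_integral J) {a..b}"
    unfolding J_def by (intro integrable_integral integrable_continuous_interval continuous_intros cont)
  ultimately have "((\<lambda>s. (\<phi>' s)^2 - 2 * m * \<phi>' s + m^2)
      has_integral (J - 2 * m * (\<phi> b - \<phi> a) + (b - a) * m^2)) {a..b}"
    using has_integral_const_real[of "m^2" a b] ab
    by (intro has_integral_add has_integral_diff has_integral_mult_right) auto
  moreover have "\<And>s. (\<phi>' s)^2 - 2 * m * \<phi>' s + m^2 = (\<phi>' s - m)^2"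
    by (simp add: power2_eq_square algebra_simps)
  ultimately have "((\<lambda>s. (\<phi>' s - m)^2) has_integral (J - 2 * m * (\<phi> b - \<phi> a) + (b - a) * m^2)) {a..b}"
    by simp
  then have "0 \<le> J - 2 * m * (\<phi> b - \<phi> a) + (b - a) * m^2"
    by (rule has_integral_nonneg) simp
  then have "(b - a) * ((b - a) * m^2) \<le> (b - a) * J"
    using ab unfolding incr by (intro mult_left_mono) (auto simp: power2_eq_square algebra_simps)
  then show ?thesis
    unfolding incr J_def by (simp add: power2_eq_square algebra_simps)
qed

lemma integral_square_le_left:
  fixes \<phi> \<phi>' :: "real \<Rightarrow> real"
  assumes ab: "a < b"
    and deriv: "\<And>x. x \<in> {a..b} \<Longrightarrow> (\<phi> has_real_derivative \<phi>' x) (at x within {a..b})"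
    and cont: "continuous_on {a..b} \<phi>'" and "\<phi> a = 0"
  shows "integral {a..b} (\<lambda>x. (\<phi> x)^2) \<le> (b - a)^2 / 2 * integral {a..b} (\<lambda>x. (\<phi>' x)^2)"
proof -
  define J where "J = integral {a..b} (\<lambda>x. (\<phi>' x)^2)"
  have pointwise: "(\<phi> x)^2 \<le> (x - a) * J" if x: "x \<in> {a..b}" for x
  proof (cases "x = a")
    case False
    then have "(\<phi> x - \<phi> a)^2 \<le> (x - a) * integral {a..x} (\<lambda>s. (\<phi>' s)^2)"
      using x by (intro square_increment_le_integral has_field_derivative_subset[OF deriv]
          continuous_on_subset[OF cont]) auto
    also have "\<dots> \<le> (x - a) * J"
      unfolding J_def using x
      by (intro mult_left_mono integral_subset_le integrable_continuous_interval continuous_intros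
          continuous_on_subset[OF cont]) auto
    finally show ?thesis using \<open>\<phi> a = 0\<close> by simp
  qed (simp add: \<open>\<phi> a = 0\<close>)
  have "((\<lambda>x. (x - a) * J) has_integral ((\<lambda>x. (x - a)^2 / 2 * J) b - (\<lambda>x. (x - a)^2 / 2 * J) a)) {a..b}"
    using ab by (intro fundamental_theorem_of_calculus)
      (auto intro!: derivative_eq_intros simp: has_real_derivative_iff_has_vector_derivative[symmetric])
  moreover have "(\<lambda>x. (\<phi> x)^2) integrable_on {a..b}"
    using deriv by (intro integrable_continuous_interval continuous_intros DERIV_continuous_on)
  ultimately show ?thesis
    using pointwise unfolding J_def by (intro has_integral_le[OF integrable_integral]) auto
qed

lemma integral_square_le_right:
  fixes \<phi> \<phi>' :: "real \<Rightarrow> real"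
  assumes ab: "a < b"
    and deriv: "\<And>x. x \<in> {a..b} \<Longrightarrow> (\<phi> has_real_derivative \<phi>' x) (at x within {a..b})"
    and cont: "continuous_on {a..b} \<phi>'" and "\<phi> b = 0"
  shows "integral {a..b} (\<lambda>x. (\<phi> x)^2) \<le> (b - a)^2 / 2 * integral {a..b} (\<lambda>x. (\<phi>' x)^2)"
proof -
  define J where "J = integral {a..b} (\<lambda>x. (\<phi>' x)^2)"
  have pointwise: "(\<phi> x)^2 \<le> (b - x) * J" if x: "x \<in> {a..b}" for x
  proof (cases "x = b")
    case False
    then have "(\<phi> b - \<phi> x)^2 \<le> (b - x) * integral {x..b} (\<lambda>s. (\<phi>' s)^2)"
      using x by (intro square_increment_le_integral has_field_derivative_subset[OF deriv]
          continuous_on_subset[OF cont]) auto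
    also have "\<dots> \<le> (b - x) * J"
      unfolding J_def using x
      by (intro mult_left_mono integral_subset_le integrable_continuous_interval continuous_intros
          continuous_on_subset[OF cont]) auto
    finally show ?thesis using \<open>\<phi> b = 0\<close> by (simp add: power2_commute)
  qed (simp add: \<open>\<phi> b = 0\<close>)
  have "((\<lambda>x. (b - x) * J) has_integral ((\<lambda>x. - ((b - x)^2) / 2 * J) b - (\<lambda>x. - ((b - x)^2) / 2 * J) a)) {a..b}"
    using ab by (intro fundamental_theorem_of_calculus)
      (auto intro!: derivative_eq_intros simp: has_real_derivative_iff_has_vector_derivative[symmetric]
        field_simps)
  moreover have "(\<lambda>x. (\<phi> x)^2) integrable_on {a..b}"
    using deriv by (intro integrable_continuous_interval continuous_intros DERIV_continuous_on)
  ultimately show ?thesis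
    using pointwise unfolding J_def by (intro has_integral_le[OF integrable_integral]) auto
qed

lemma poincare_zero_boundary:
  fixes \<phi> \<phi>' :: "real \<Rightarrow> real"
  assumes deriv: "\<And>x. x \<in> {0..1} \<Longrightarrow> (\<phi> has_real_derivative \<phi>' x) (at x within {0..1})"
    and cont: "continuous_on {0..1} \<phi>'"
    and "\<phi> 0 = 0" "\<phi> 1 = 0"
  shows "integral {0..1} (\<lambda>x. (\<phi> x)^2) \<le> integral {0..1} (\<lambda>x. (\<phi>' x)^2) / 8"
proof -
  have deriv_sub: "(\<phi> has_real_derivative \<phi>' x) (at x within {a..b})"
    if "0 \<le> a" "b \<le> 1" "x \<in> {a..b}" for a b x
    by (rule has_field_derivative_subset[OF deriv]) (use that in auto)
  have cont_sub: "continuous_on {a..b} \<phi>'" if "0 \<le> a" "b \<le> 1" for a b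
    by (rule continuous_on_subset[OF cont]) (use that in auto)
  have "integral {0..1/2} (\<lambda>x. (\<phi> x)^2) \<le> (1/2 - 0)^2 / 2 * integral {0..1/2} (\<lambda>x. (\<phi>' x)^2)"
    using deriv_sub cont_sub \<open>\<phi> 0 = 0\<close> by (intro integral_square_le_left) auto
  moreover have "integral {1/2..1} (\<lambda>x. (\<phi> x)^2) \<le> (1 - 1/2)^2 / 2 * integral {1/2..1} (\<lambda>x. (\<phi>' x)^2)"
    using deriv_sub cont_sub \<open>\<phi> 1 = 0\<close> by (intro integral_square_le_right) auto
  moreover have "integral {0..1} (\<lambda>x. (\<phi> x)^2)
      = integral {0..1/2} (\<lambda>x. (\<phi> x)^2) + integral {1/2..1} (\<lambda>x. (\<phi> x)^2)"
    using deriv by (intro Henstock_Kurzweil_Integration.integral_combine[symmetric]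
        integrable_continuous_interval continuous_intros DERIV_continuous_on) auto
  moreover have "integral {0..1} (\<lambda>x. (\<phi>' x)^2)
      = integral {0..1/2} (\<lambda>x. (\<phi>' x)^2) + integral {1/2..1} (\<lambda>x. (\<phi>' x)^2)"
    by (intro Henstock_Kurzweil_Integration.integral_combine[symmetric]
        integrable_continuous_interval continuous_intros cont) auto
  ultimately show ?thesis
    by (simp add: power2_eq_square)
qed

lemma integral_by_parts_vanishing:
  fixes p p' q q' :: "real \<Rightarrow> real"
  assumes dp: "\<And>x. x \<in> {0..1} \<Longrightarrow> (p has_real_derivative p' x) (at x within {0..1})"
    and dq: "\<And>x. x \<in> {0..1} \<Longrightarrow> (q has_real_derivative q' x) (at x within {0..1})"
    and "p 0 * q 0 = 0" "p 1 * q 1 = 0"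
    and "continuous_on {0..1} p'" "continuous_on {0..1} q'"
  shows "integral {0..1} (\<lambda>x. p' x * q x) + integral {0..1} (\<lambda>x. p x * q' x) = 0"
proof -
  have "((\<lambda>x. p' x * q x + p x * q' x) has_integral (p 1 * q 1 - p 0 * q 0)) {0..1}"
  proof (rule fundamental_theorem_of_calculus)
    fix x :: real assume x: "x \<in> {0..1}"
    show "((\<lambda>x. p x * q x) has_vector_derivative p' x * q x + p x * q' x) (at x within {0..1})"
      unfolding has_real_derivative_iff_has_vector_derivative[symmetric]
      using dp[OF x] dq[OF x] by (auto intro!: derivative_eq_intros)
  qed simp
  then have "integral {0..1} (\<lambda>x. p' x * q x + p x * q' x) = 0"
    using assms(3,4) by (simp add: integral_unique)
  moreover have "continuous_on {0..1} p"
    using dp by (rule DERIV_continuous_on)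
  moreover have "continuous_on {0..1} q"
    using dq by (rule DERIV_continuous_on)
  ultimately show ?thesis
    using assms(5,6) by (simp add: integral_linear_continuous_on continuous_intros)
qed

lemma integral_squares_le_second_derivative:
  fixes u ux uxx :: "real \<Rightarrow> real"
  assumes du: "\<And>x. x \<in> {0..1} \<Longrightarrow> (u has_real_derivative ux x) (at x within {0..1})"
    and dux: "\<And>x. x \<in> {0..1} \<Longrightarrow> (ux has_real_derivative uxx x) (at x within {0..1})"
    and cuxx: "continuous_on {0..1} uxx"
    and "u 0 = 0" "u 1 = 0"
  shows "integral {0..1} (\<lambda>x. (ux x)^2) \<le> integral {0..1} (\<lambda>x. (uxx x)^2) / 8"
    and "integral {0..1} (\<lambda>x. (u x)^2) \<le> integral {0..1} (\<lambda>x. (uxx x)^2) / 64"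
proof -
  have cu: "continuous_on {0..1} u"
    using du by (rule DERIV_continuous_on)
  have cux: "continuous_on {0..1} ux"
    using dux by (rule DERIV_continuous_on)
  define U where "U = integral {0..1} (\<lambda>x. (u x)^2)"
  define A where "A = integral {0..1} (\<lambda>x. (ux x)^2)"
  define B where "B = integral {0..1} (\<lambda>x. (uxx x)^2)"
  have poincare: "U \<le> A / 8"
    unfolding U_def A_def using du cux assms(4,5) by (rule poincare_zero_boundary)
  have "integral {0..1} (\<lambda>x. ux x * ux x) + integral {0..1} (\<lambda>x. u x * uxx x) = 0"
    using du dux by (rule integral_by_parts_vanishing) (simp_all add: assms cux cuxx)
  then have "A = integral {0..1} (\<lambda>x. - (u x * uxx x))"
    unfolding A_def by (simp add: power2_eq_square)
  also have "\<dots> \<le> integral {0..1} (\<lambda>x. 4 * (u x)^2 + (uxx x)^2 / 16)"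
  proof (rule integral_le_continuous_on)
    fix x :: real
    have "0 \<le> (2 * u x + uxx x / 4)^2" by simp
    then show "- (u x * uxx x) \<le> 4 * (u x)^2 + (uxx x)^2 / 16"
      by (simp add: power2_eq_square algebra_simps)
  qed (auto intro!: continuous_intros cu cuxx)
  also have "\<dots> = 4 * U + B / 16"
    unfolding U_def B_def using cu cuxx by (simp add: integral_linear_continuous_on continuous_intros)
  finally have "A \<le> 4 * U + B / 16" .
  then show "A \<le> B / 8" and "U \<le> B / 64"
    using poincare by simp_all
qed

section \<open>The constants\<close>

lemma c1sq_bounds:
  assumes "\<epsilon> > 0"
  shows "0 < c1sq \<epsilon>" "c1sq \<epsilon> \<le> \<epsilon>^2 / 8" "c1sq \<epsilon> \<le> 1/4"
proof -
  have "0 < omega1" "omega1 \<le> 1"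
    unfolding omega1_def by (auto simp: add_pos_nonneg)
  then have "0 < \<epsilon>^2 * omega1 / 8" "\<epsilon>^2 * omega1 / 8 \<le> \<epsilon>^2 / 8"
    using assms by (auto simp: mult_left_le)
  then show "0 < c1sq \<epsilon>" "c1sq \<epsilon> \<le> \<epsilon>^2 / 8" "c1sq \<epsilon> \<le> 1/4"
    unfolding c1sq_def by auto
qed

lemma c2sq_bounds: "1 + \<epsilon>/2 \<le> c2sq \<epsilon>" "\<epsilon> * (1 + \<epsilon>) / 2 \<le> c2sq \<epsilon>"
  unfolding c2sq_def by (simp_all add: max_def field_simps)

lemma c2sq_pos: "0 < c2sq \<epsilon>"
  unfolding c2sq_def by (cases "\<epsilon> > -2") (auto simp: less_max_iff_disj intro!: mult_neg_neg)

lemma omega2_less: "omega2 < 1792/1825"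
proof -
  have "pi^2 < 16"
    using pi_less_4 pi_gt3 power_strict_mono[of pi 4 2] by simp
  then have "pi^2 * pi^2 < 16 * pi^2"
    by (rule mult_strict_right_mono) simp
  moreover have "pi^4 = pi^2 * pi^2"
    by (simp add: power4_eq_xxxx power2_eq_square)
  moreover have "0 < pi^2" by simp
  ultimately have "33 * pi^4 < 1792 + 1792 * pi^2"
    by linarith
  moreover have "0 < 1 + pi^2 + pi^4" by (simp add: add_pos_nonneg)
  ultimately show ?thesis
    unfolding omega2_def by (simp add: divide_less_eq field_simps)
qed


section \<open>The Lyapunov functional\<close>

lemma dsq_split:
  assumes "continuous_on {0..1} u" "continuous_on {0..1} ux" "continuous_on {0..1} uxx"
    "continuous_on {0..1} ut"
  shows "dsq u ux uxx ut = integral {0..1} (\<lambda>x. (u x)^2) + integral {0..1} (\<lambda>x. (ux x)^2)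
    + integral {0..1} (\<lambda>x. (uxx x)^2) + integral {0..1} (\<lambda>x. (ut x)^2)"
  unfolding dsq_def using assms by (simp add: integral_linear_continuous_on continuous_intros)

definition lyapunov :: "real \<Rightarrow> (real \<Rightarrow> real) \<Rightarrow> (real \<Rightarrow> real) \<Rightarrow> (real \<Rightarrow> real) \<Rightarrow> real" where
  "lyapunov \<epsilon> ux uxx ut =
    integral {0..1} (\<lambda>x. (ut x)^2 + (ux x)^2 + \<epsilon>^2/2 * (uxx x)^2 - \<epsilon> * (ut x * uxx x))"

definition lyapunov_deriv ::
  "real \<Rightarrow> (real \<Rightarrow> real) \<Rightarrow> (real \<Rightarrow> real) \<Rightarrow> (real \<Rightarrow> real) \<Rightarrow> (real \<Rightarrow> real) \<Rightarrow> (real \<Rightarrow> real) \<Rightarrow>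
    (real \<Rightarrow> real) \<Rightarrow> real" where
  "lyapunov_deriv \<epsilon> ux uxx ut uxt uxxt utt =
    integral {0..1} (\<lambda>x. 2 * (ut x * utt x) + 2 * (ux x * uxt x)
      + \<epsilon>^2/2 * (2 * (uxx x * uxxt x)) - \<epsilon> * (utt x * uxx x + ut x * uxxt x))"

lemma lyapunov_ge_squares:
  fixes ux uxx ut :: "real \<Rightarrow> real"
  assumes cont: "continuous_on {0..1} ux" "continuous_on {0..1} uxx" "continuous_on {0..1} ut"
  shows "3/10 * integral {0..1} (\<lambda>x. (ut x)^2) + integral {0..1} (\<lambda>x. (ux x)^2)
      + \<epsilon>^2/7 * integral {0..1} (\<lambda>x. (uxx x)^2) \<le> lyapunov \<epsilon> ux uxx ut"
proof -
  have "3/10 * integral {0..1} (\<lambda>x. (ut x)^2) + integral {0..1} (\<lambda>x. (ux x)^2)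
      + \<epsilon>^2/7 * integral {0..1} (\<lambda>x. (uxx x)^2)
      = integral {0..1} (\<lambda>x. 3/10 * (ut x)^2 + (ux x)^2 + \<epsilon>^2/7 * (uxx x)^2)"
    using cont by (simp add: integral_linear_continuous_on continuous_intros)
  also have "\<dots> \<le> lyapunov \<epsilon> ux uxx ut"
    unfolding lyapunov_def
  proof (rule integral_le_continuous_on)
    fix x :: real
    have "0 \<le> 7/10 * (ut x - 5/7 * \<epsilon> * uxx x)^2" by simp
    then show "3/10 * (ut x)^2 + (ux x)^2 + \<epsilon>^2/7 * (uxx x)^2
        \<le> (ut x)^2 + (ux x)^2 + \<epsilon>^2/2 * (uxx x)^2 - \<epsilon> * (ut x * uxx x)"
      by (simp add: power2_eq_square algebra_simps)
  qed (auto intro!: continuous_intros cont)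
  finally show ?thesis .
qed

lemma lyapunov_le_squares:
  fixes ux uxx ut :: "real \<Rightarrow> real"
  assumes "\<epsilon> \<ge> 0"
    and cont: "continuous_on {0..1} ux" "continuous_on {0..1} uxx" "continuous_on {0..1} ut"
  shows "lyapunov \<epsilon> ux uxx ut \<le> (1 + \<epsilon>/2) * integral {0..1} (\<lambda>x. (ut x)^2)
      + integral {0..1} (\<lambda>x. (ux x)^2) + (\<epsilon>^2/2 + \<epsilon>/2) * integral {0..1} (\<lambda>x. (uxx x)^2)"
proof -
  have "lyapunov \<epsilon> ux uxx ut
      \<le> integral {0..1} (\<lambda>x. (1 + \<epsilon>/2) * (ut x)^2 + (ux x)^2 + (\<epsilon>^2/2 + \<epsilon>/2) * (uxx x)^2)"
    unfolding lyapunov_def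
  proof (rule integral_le_continuous_on)
    fix x :: real
    have "0 \<le> \<epsilon>/2 * (ut x + uxx x)^2" using assms(1) by simp
    then show "(ut x)^2 + (ux x)^2 + \<epsilon>^2/2 * (uxx x)^2 - \<epsilon> * (ut x * uxx x)
        \<le> (1 + \<epsilon>/2) * (ut x)^2 + (ux x)^2 + (\<epsilon>^2/2 + \<epsilon>/2) * (uxx x)^2"
      by (simp add: power2_eq_square algebra_simps)
  qed (auto intro!: continuous_intros cont)
  also have "\<dots> = (1 + \<epsilon>/2) * integral {0..1} (\<lambda>x. (ut x)^2)
      + integral {0..1} (\<lambda>x. (ux x)^2) + (\<epsilon>^2/2 + \<epsilon>/2) * integral {0..1} (\<lambda>x. (uxx x)^2)"
    using cont by (simp add: integral_linear_continuous_on continuous_intros)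
  finally show ?thesis .
qed

text \<open>The factor 28/25 compensates for the dissipation rate \<open>32\<epsilon>/73\<close> in
  \<open>lyapunov_deriv_bound\<close>, which is smaller than the rate \<open>\<omega>\<^sub>2\<epsilon>/2\<close> behind \<open>p\<close> because
  \<open>poincare_zero_boundary\<close> has the constant 8 instead of \<open>\<pi>\<^sup>2\<close>; see \<open>decay_pos\<close>.\<close>
lemma lyapunov_lower_bound:
  fixes u ux uxx ut :: "real \<Rightarrow> real"
  assumes eps: "\<epsilon> > 0"
    and du: "\<And>x. x \<in> {0..1} \<Longrightarrow> (u has_real_derivative ux x) (at x within {0..1})"
    and dux: "\<And>x. x \<in> {0..1} \<Longrightarrow> (ux has_real_derivative uxx x) (at x within {0..1})"
    and cuxx: "continuous_on {0..1} uxx" and cut: "continuous_on {0..1} ut"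
    and "u 0 = 0" "u 1 = 0"
  shows "28/25 * c1sq \<epsilon> * dsq u ux uxx ut \<le> lyapunov \<epsilon> ux uxx ut"
proof -
  have cu: "continuous_on {0..1} u"
    using du by (rule DERIV_continuous_on)
  have cux: "continuous_on {0..1} ux"
    using dux by (rule DERIV_continuous_on)
  define U where "U = integral {0..1} (\<lambda>x. (u x)^2)"
  define A where "A = integral {0..1} (\<lambda>x. (ux x)^2)"
  define B where "B = integral {0..1} (\<lambda>x. (uxx x)^2)"
  define E where "E = integral {0..1} (\<lambda>x. (ut x)^2)"
  have nonneg: "0 \<le> U" "0 \<le> A" "0 \<le> B" "0 \<le> E"
    unfolding U_def A_def B_def E_def by (intro integral_square_nonneg cu cux cuxx cut)+
  have UB: "U \<le> B / 64"
    unfolding U_def B_def using du dux cuxx assms(6,7) by (rule integral_squares_le_second_derivative)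
  have lyap: "3/10 * E + A + \<epsilon>^2/7 * B \<le> lyapunov \<epsilon> ux uxx ut"
    unfolding E_def A_def B_def using cux cuxx cut by (rule lyapunov_ge_squares)
  define c where "c = c1sq \<epsilon>"
  have c: "0 < c" "c \<le> \<epsilon>^2/8" "c \<le> 1/4"
    unfolding c_def using c1sq_bounds[OF eps] by auto
  have "c * E \<le> 1/4 * E" "c * A \<le> 1/4 * A"
    using c nonneg by (intro mult_right_mono; simp)+
  moreover have "c * (U + B) \<le> \<epsilon>^2/8 * (65/64 * B)"
    using c nonneg UB by (intro mult_mono) auto
  moreover have "0 \<le> \<epsilon>^2 * B"
    using nonneg by simp
  moreover have "28/25 * c * (U + A + B + E) = 28/25 * (c * E) + 28/25 * (c * A) + 28/25 * (c * (U + B))"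
    by (simp add: algebra_simps)
  moreover have "\<epsilon>^2/8 * (65/64 * B) = 65/512 * (\<epsilon>^2 * B)" "\<epsilon>^2/7 * B = 1/7 * (\<epsilon>^2 * B)"
    by simp_all
  ultimately have "28/25 * c * (U + A + B + E) \<le> 3/10 * E + A + \<epsilon>^2/7 * B"
    using nonneg by linarith
  moreover have "dsq u ux uxx ut = U + A + B + E"
    unfolding U_def A_def B_def E_def using cu cux cuxx cut by (rule dsq_split)
  ultimately show ?thesis
    using lyap unfolding c_def by simp
qed

lemma lyapunov_upper_bound:
  fixes u ux uxx ut :: "real \<Rightarrow> real"
  assumes eps: "\<epsilon> > 0"
    and cont: "continuous_on {0..1} u" "continuous_on {0..1} ux" "continuous_on {0..1} uxx"
      "continuous_on {0..1} ut"
  shows "lyapunov \<epsilon> ux uxx ut \<le> c2sq \<epsilon> * dsq u ux uxx ut"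
proof -
  define U where "U = integral {0..1} (\<lambda>x. (u x)^2)"
  define A where "A = integral {0..1} (\<lambda>x. (ux x)^2)"
  define B where "B = integral {0..1} (\<lambda>x. (uxx x)^2)"
  define E where "E = integral {0..1} (\<lambda>x. (ut x)^2)"
  have nonneg: "0 \<le> U" "0 \<le> A" "0 \<le> B" "0 \<le> E"
    unfolding U_def A_def B_def E_def by (intro integral_square_nonneg cont)+
  have "lyapunov \<epsilon> ux uxx ut \<le> (1 + \<epsilon>/2) * E + A + (\<epsilon>^2/2 + \<epsilon>/2) * B"
    unfolding E_def A_def B_def using eps cont(2-4) by (intro lyapunov_le_squares) auto
  also have "\<dots> \<le> c2sq \<epsilon> * (U + A + B + E)"
  proof -
    have "(1 + \<epsilon>/2) * E \<le> c2sq \<epsilon> * E" "1 * A \<le> c2sq \<epsilon> * A"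
      "(\<epsilon>^2/2 + \<epsilon>/2) * B \<le> c2sq \<epsilon> * B"
      using c2sq_bounds[of \<epsilon>] nonneg eps
      by (intro mult_right_mono; simp add: power2_eq_square algebra_simps)+
    moreover have "0 \<le> c2sq \<epsilon> * U"
      using c2sq_bounds[of \<epsilon>] nonneg eps by simp
    ultimately show ?thesis by (simp add: algebra_simps)
  qed
  also have "U + A + B + E = dsq u ux uxx ut"
    unfolding U_def A_def B_def E_def using cont by (rule dsq_split[symmetric])
  finally show ?thesis .
qed

lemma lyapunov_deriv_eq:
  fixes ux uxx ut uxt uxxt utt F :: "real \<Rightarrow> real"
  assumes dux: "\<And>x. x \<in> {0..1} \<Longrightarrow> (ux has_real_derivative uxx x) (at x within {0..1})"
    and dut: "\<And>x. x \<in> {0..1} \<Longrightarrow> (ut has_real_derivative uxt x) (at x within {0..1})"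
    and duxt: "\<And>x. x \<in> {0..1} \<Longrightarrow> (uxt has_real_derivative uxxt x) (at x within {0..1})"
    and cont: "continuous_on {0..1} uxx" "continuous_on {0..1} uxxt" "continuous_on {0..1} utt"
      "continuous_on {0..1} F"
    and "ut 0 = 0" "ut 1 = 0"
    and pde: "\<And>x. x \<in> {0<..<1} \<Longrightarrow> utt x = F x + \<epsilon> * uxxt x + uxx x"
  shows "lyapunov_deriv \<epsilon> ux uxx ut uxt uxxt utt = integral {0..1} (\<lambda>x. (2 * ut x - \<epsilon> * uxx x) * F x)
    - \<epsilon> * integral {0..1} (\<lambda>x. (uxx x)^2) - \<epsilon> * integral {0..1} (\<lambda>x. (uxt x)^2)"
proof -
  have "continuous_on {0..1} ux"
    using dux by (rule DERIV_continuous_on)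
  moreover have "continuous_on {0..1} ut"
    using dut by (rule DERIV_continuous_on)
  moreover have "continuous_on {0..1} uxt"
    using duxt by (rule DERIV_continuous_on)
  ultimately have cont': "continuous_on {0..1} ux" "continuous_on {0..1} ut" "continuous_on {0..1} uxt"
    "continuous_on {0..1} uxx" "continuous_on {0..1} uxxt" "continuous_on {0..1} utt"
    "continuous_on {0..1} F"
    using cont by auto
  have parts1: "integral {0..1} (\<lambda>x. uxt x * uxt x) + integral {0..1} (\<lambda>x. ut x * uxxt x) = 0"
    using dut duxt by (rule integral_by_parts_vanishing) (simp_all add: assms cont')
  have parts2: "integral {0..1} (\<lambda>x. uxt x * ux x) + integral {0..1} (\<lambda>x. ut x * uxx x) = 0"
    using dut dux by (rule integral_by_parts_vanishing) (simp_all add: assms cont')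
  have "lyapunov_deriv \<epsilon> ux uxx ut uxt uxxt utt = integral {0..1} (\<lambda>x. (2 * ut x - \<epsilon> * uxx x) * F x
      - \<epsilon> * (uxx x)^2 + \<epsilon> * (ut x * uxxt x) + 2 * (ut x * uxx x) + 2 * (uxt x * ux x))"
    unfolding lyapunov_deriv_def
  proof (rule integral_spike[of "{0, 1}"])
    fix x :: real
    assume "x \<in> {0..1} - {0, 1}"
    then have "x \<in> {0<..<1}" by auto
    from pde[OF this] show "(2 * ut x - \<epsilon> * uxx x) * F x - \<epsilon> * (uxx x)^2
        + \<epsilon> * (ut x * uxxt x) + 2 * (ut x * uxx x) + 2 * (uxt x * ux x)
      = 2 * (ut x * utt x) + 2 * (ux x * uxt x)
        + \<epsilon>^2/2 * (2 * (uxx x * uxxt x)) - \<epsilon> * (utt x * uxx x + ut x * uxxt x)"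
      by (simp add: power2_eq_square algebra_simps)
  qed auto
  also have "\<dots> = integral {0..1} (\<lambda>x. (2 * ut x - \<epsilon> * uxx x) * F x)
      - \<epsilon> * integral {0..1} (\<lambda>x. (uxx x)^2) + \<epsilon> * integral {0..1} (\<lambda>x. ut x * uxxt x)
      + 2 * integral {0..1} (\<lambda>x. ut x * uxx x) + 2 * integral {0..1} (\<lambda>x. uxt x * ux x)"
    using cont' by (simp add: integral_linear_continuous_on continuous_intros)
  also have "integral {0..1} (\<lambda>x. ut x * uxxt x) = - integral {0..1} (\<lambda>x. (uxt x)^2)"
    using parts1 by (simp add: power2_eq_square)
  also have "integral {0..1} (\<lambda>x. uxt x * ux x) = - integral {0..1} (\<lambda>x. ut x * uxx x)"
    using parts2 by simp
  finally show ?thesis by simp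
qed

lemma integral_forcing_le:
  fixes ut uxx F :: "real \<Rightarrow> real"
  assumes "\<epsilon> > 0" "continuous_on {0..1} ut" "continuous_on {0..1} uxx" "continuous_on {0..1} F"
  shows "integral {0..1} (\<lambda>x. (2 * ut x - \<epsilon> * uxx x) * F x)
    \<le> (\<epsilon>/2 + 2/\<epsilon>) * integral {0..1} (\<lambda>x. (F x)^2) + \<epsilon>/2 * integral {0..1} (\<lambda>x. (ut x)^2)
      + \<epsilon>/2 * integral {0..1} (\<lambda>x. (uxx x)^2)"
proof -
  have "integral {0..1} (\<lambda>x. (2 * ut x - \<epsilon> * uxx x) * F x)
      \<le> integral {0..1} (\<lambda>x. (\<epsilon>/2 + 2/\<epsilon>) * (F x)^2 + \<epsilon>/2 * (ut x)^2 + \<epsilon>/2 * (uxx x)^2)"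
  proof (rule integral_le_continuous_on)
    fix x :: real
    have "0 \<le> \<epsilon>/2 * (ut x - 2/\<epsilon> * F x)^2" "0 \<le> \<epsilon>/2 * (uxx x + F x)^2"
      using assms(1) by simp_all
    then show "(2 * ut x - \<epsilon> * uxx x) * F x
        \<le> (\<epsilon>/2 + 2/\<epsilon>) * (F x)^2 + \<epsilon>/2 * (ut x)^2 + \<epsilon>/2 * (uxx x)^2"
      using assms(1) by (simp add: power2_eq_square algebra_simps)
  qed (auto intro!: continuous_intros assms(2-4))
  also have "\<dots> = (\<epsilon>/2 + 2/\<epsilon>) * integral {0..1} (\<lambda>x. (F x)^2)
      + \<epsilon>/2 * integral {0..1} (\<lambda>x. (ut x)^2) + \<epsilon>/2 * integral {0..1} (\<lambda>x. (uxx x)^2)"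
    using assms(2-4) by (simp add: integral_linear_continuous_on continuous_intros)
  finally show ?thesis .
qed

lemma lyapunov_deriv_bound:
  fixes u ux uxx ut uxt uxxt utt F :: "real \<Rightarrow> real"
  assumes eps: "\<epsilon> > 0"
    and du: "\<And>x. x \<in> {0..1} \<Longrightarrow> (u has_real_derivative ux x) (at x within {0..1})"
    and dux: "\<And>x. x \<in> {0..1} \<Longrightarrow> (ux has_real_derivative uxx x) (at x within {0..1})"
    and dut: "\<And>x. x \<in> {0..1} \<Longrightarrow> (ut has_real_derivative uxt x) (at x within {0..1})"
    and duxt: "\<And>x. x \<in> {0..1} \<Longrightarrow> (uxt has_real_derivative uxxt x) (at x within {0..1})"
    and cont: "continuous_on {0..1} uxx" "continuous_on {0..1} uxxt" "continuous_on {0..1} utt"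
      "continuous_on {0..1} F"
    and "u 0 = 0" "u 1 = 0" "ut 0 = 0" "ut 1 = 0"
    and pde: "\<And>x. x \<in> {0<..<1} \<Longrightarrow> utt x = F x + \<epsilon> * uxxt x + uxx x"
  shows "lyapunov_deriv \<epsilon> ux uxx ut uxt uxxt utt
    \<le> (\<epsilon>/2 + 2/\<epsilon>) * integral {0..1} (\<lambda>x. (F x)^2) - 32 * \<epsilon> / 73 * dsq u ux uxx ut"
proof -
  have cu: "continuous_on {0..1} u"
    using du by (rule DERIV_continuous_on)
  have cux: "continuous_on {0..1} ux"
    using dux by (rule DERIV_continuous_on)
  have cut: "continuous_on {0..1} ut"
    using dut by (rule DERIV_continuous_on)
  have cuxt: "continuous_on {0..1} uxt"
    using duxt by (rule DERIV_continuous_on)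
  define U where "U = integral {0..1} (\<lambda>x. (u x)^2)"
  define A where "A = integral {0..1} (\<lambda>x. (ux x)^2)"
  define B where "B = integral {0..1} (\<lambda>x. (uxx x)^2)"
  define E where "E = integral {0..1} (\<lambda>x. (ut x)^2)"
  define X where "X = integral {0..1} (\<lambda>x. (uxt x)^2)"
  define Y where "Y = integral {0..1} (\<lambda>x. (2 * ut x - \<epsilon> * uxx x) * F x)"
  define FF where "FF = integral {0..1} (\<lambda>x. (F x)^2)"
  have nonneg: "0 \<le> U" "0 \<le> A" "0 \<le> B" "0 \<le> E"
    unfolding U_def A_def B_def E_def by (intro integral_square_nonneg cu cux cut cont)+
  have UB: "U \<le> B / 64"
    unfolding U_def B_def using du dux cont(1) assms(10,11)
    by (rule integral_squares_le_second_derivative(2))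
  have AB: "A \<le> B / 8"
    unfolding A_def B_def using du dux cont(1) assms(10,11)
    by (rule integral_squares_le_second_derivative(1))
  have EX: "E \<le> X / 8"
    unfolding E_def X_def using dut cuxt assms(12,13) by (rule poincare_zero_boundary)
  have Y: "Y \<le> (\<epsilon>/2 + 2/\<epsilon>) * FF + \<epsilon>/2 * E + \<epsilon>/2 * B"
    unfolding Y_def FF_def E_def B_def using eps cut cont(1,4) by (rule integral_forcing_le)
  have "32/73 * (U + A) \<le> 32/73 * (9/64 * B)"
    using UB AB by simp
  then have "E/2 - X - B/2 + 32/73 * (U + A + B + E) \<le> 0"
    using nonneg EX by (simp add: field_simps)
  then have "\<epsilon> * (E/2 - X - B/2 + 32/73 * (U + A + B + E)) \<le> 0"
    using eps by (simp add: mult_le_0_iff)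
  moreover have "lyapunov_deriv \<epsilon> ux uxx ut uxt uxxt utt = Y - \<epsilon> * B - \<epsilon> * X"
    unfolding Y_def B_def X_def
    using dux dut duxt cont assms(12,13) pde by (rule lyapunov_deriv_eq)
  moreover have "dsq u ux uxx ut = U + A + B + E"
    unfolding U_def A_def B_def E_def using cu cux cont(1) cut by (rule dsq_split)
  ultimately show ?thesis
    using Y unfolding FF_def by (simp add: algebra_simps)
qed

section \<open>Scalar comparison arguments\<close>

lemma linear_differential_inequality:
  fixes V k h :: "real \<Rightarrow> real"
  assumes ab: "a \<le> b"
    and cV: "continuous_on {a..b} V" and ck: "continuous_on {a..b} k" and ch: "continuous_on {a..b} h"
    and dV: "\<And>t. t \<in> {a<..<b} \<Longrightarrow> \<exists>D. (V has_real_derivative D) (at t) \<and> D \<le> k t * V t + h t"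
  shows "V b \<le> exp (integral {a..b} k) * V a + integral {a..b} (\<lambda>\<tau>. exp (integral {\<tau>..b} k) * h \<tau>)"
proof -
  define P where "P t = exp (integral {t..b} k)" for t
  have cK: "continuous_on {a..b} (\<lambda>t. integral {t..b} k)"
    using ck by (intro indefinite_integral_continuous_1' integrable_continuous_interval)
  have cPh: "continuous_on {a..b} (\<lambda>\<tau>. P \<tau> * h \<tau>)"
    unfolding P_def by (intro continuous_intros cK ch)
  define W where "W t = P t * V t - integral {a..t} (\<lambda>\<tau>. P \<tau> * h \<tau>)" for t
  have "W b \<le> W a"
  proof (rule DERIV_nonpos_imp_decreasing_open[OF ab])
    fix t
    assume t: "a < t" "t < b"
    then have at: "at t within {a..b} = at t"
      by (rule at_within_Icc_at)
    obtain D where D: "(V has_real_derivative D) (at t)" "D \<le> k t * V t + h t"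
      using dV t by auto
    have "((\<lambda>s. integral {s..b} k) has_real_derivative - k t) (at t within {a..b})"
      by (rule integral_has_real_derivative'[OF ck]) (use t in auto)
    then have dK: "((\<lambda>s. integral {s..b} k) has_real_derivative - k t) (at t)"
      unfolding at .
    have "((\<lambda>s. integral {a..s} (\<lambda>\<tau>. P \<tau> * h \<tau>)) has_real_derivative P t * h t) (at t within {a..b})"
      by (rule integral_has_real_derivative[OF cPh]) (use t in auto)
    then have dI: "((\<lambda>s. integral {a..s} (\<lambda>\<tau>. P \<tau> * h \<tau>)) has_real_derivative P t * h t) (at t)"
      unfolding at .
    have dP: "(P has_real_derivative P t * (- k t)) (at t)"
      unfolding P_def[abs_def] by (auto intro!: derivative_eq_intros dK)
    have "(W has_real_derivative P t * (- k t) * V t + P t * D - P t * h t) (at t)"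
      unfolding W_def[abs_def] by (auto intro!: derivative_eq_intros dP dI D(1))
    moreover have "P t * D \<le> P t * (k t * V t + h t)"
      using D(2) by (intro mult_left_mono) (auto simp: P_def)
    ultimately show "\<exists>y. (W has_real_derivative y) (at t) \<and> y \<le> 0"
      by (intro exI[of _ "P t * (- k t) * V t + P t * D - P t * h t"]) (auto simp: algebra_simps)
  next
    show "continuous_on {a..b} W"
      unfolding W_def P_def
      by (intro continuous_intros cK cV indefinite_integral_continuous_1 integrable_continuous_interval
          cPh[unfolded P_def])
  qed
  then show ?thesis
    by (simp add: W_def P_def)
qed

lemma integral_exp_decay_le:
  assumes "a \<le> b" "(\<delta> :: real) > 0"
  shows "integral {a..b} (\<lambda>\<tau>. exp (-\<delta> * (b - \<tau>))) \<le> 1 / \<delta>"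
proof -
  have "((\<lambda>\<tau>. exp (-\<delta> * (b - \<tau>))) has_integral
      (\<lambda>\<tau>. exp (-\<delta> * (b - \<tau>)) / \<delta>) b - (\<lambda>\<tau>. exp (-\<delta> * (b - \<tau>)) / \<delta>) a) {a..b}"
    using assms by (intro fundamental_theorem_of_calculus)
      (auto intro!: derivative_eq_intros simp: has_real_derivative_iff_has_vector_derivative[symmetric])
  then have "integral {a..b} (\<lambda>\<tau>. exp (-\<delta> * (b - \<tau>))) = 1/\<delta> - exp (-\<delta> * (b - a)) / \<delta>"
    by (simp add: integral_unique)
  also have "\<dots> \<le> 1/\<delta>"
    using assms by simp
  finally show ?thesis .
qed

lemma exp_decay_below:
  fixes A \<delta> c m :: real
  assumes "0 < A" "0 < \<delta>" "0 < c"
  obtains h where "m \<le> h" "0 < h" "A * exp (- \<delta> * h) \<le> c"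
proof -
  define h where "h = max m (max 1 (ln (A / c) / \<delta>))"
  have "ln (A / c) / \<delta> \<le> h"
    unfolding h_def by simp
  then have "ln (A / c) \<le> \<delta> * h"
    using assms by (simp add: divide_le_eq mult.commute)
  then have "exp (- \<delta> * h) \<le> exp (- ln (A / c))"
    by simp
  also have "\<dots> = c / A"
    using assms by (simp add: exp_minus)
  finally have "A * exp (- \<delta> * h) \<le> A * (c / A)"
    using assms by (intro mult_left_mono) auto
  then show ?thesis
    using assms by (intro that[of h]) (auto simp: h_def)
qed

lemma linear_differential_inequality_decay:
  fixes V k h H :: "real \<Rightarrow> real"
  assumes ab: "a \<le> b" and \<delta>: "\<delta> > 0"
    and cV: "continuous_on {a..b} V" and ck: "continuous_on {a..b} k"
    and ch: "continuous_on {a..b} h" and cH: "continuous_on {a..b} H"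
    and dV: "\<And>t. t \<in> {a<..<b} \<Longrightarrow> \<exists>D. (V has_real_derivative D) (at t) \<and> D \<le> k t * V t + h t"
    and k_int: "\<And>\<tau>. \<tau> \<in> {a..b} \<Longrightarrow> integral {\<tau>..b} k \<le> S - \<delta> * (b - \<tau>)"
    and h_bound: "\<And>t. t \<in> {a..b} \<Longrightarrow> 0 \<le> h t \<and> h t \<le> e + H t"
    and H_nonneg: "\<And>t. t \<in> {a..b} \<Longrightarrow> 0 \<le> H t" and H_int: "integral {a..b} H \<le> e'"
    and "0 \<le> e" "0 \<le> V a"
  shows "V b \<le> exp S * (exp (-\<delta> * (b - a)) * V a + e / \<delta> + e')"
proof -
  have "V b \<le> exp (integral {a..b} k) * V a + integral {a..b} (\<lambda>\<tau>. exp (integral {\<tau>..b} k) * h \<tau>)"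
    using ab cV ck ch dV by (rule linear_differential_inequality)
  also have "exp (integral {a..b} k) * V a \<le> exp S * exp (-\<delta> * (b - a)) * V a"
    using k_int[of a] ab \<open>0 \<le> V a\<close> by (intro mult_right_mono) (auto simp: exp_add[symmetric])
  also have "integral {a..b} (\<lambda>\<tau>. exp (integral {\<tau>..b} k) * h \<tau>)
      \<le> integral {a..b} (\<lambda>\<tau>. exp S * e * exp (-\<delta> * (b - \<tau>)) + exp S * H \<tau>)"
  proof (rule integral_le_continuous_on)
    show "continuous_on {a..b} (\<lambda>\<tau>. exp (integral {\<tau>..b} k) * h \<tau>)"
      using ck by (intro continuous_intros indefinite_integral_continuous_1' integrable_continuous_interval ch)
    show "continuous_on {a..b} (\<lambda>\<tau>. exp S * e * exp (-\<delta> * (b - \<tau>)) + exp S * H \<tau>)"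
      by (intro continuous_intros cH)
  next
    fix \<tau>
    assume \<tau>: "\<tau> \<in> {a..b}"
    have "exp (integral {\<tau>..b} k) * h \<tau> \<le> (exp S * exp (-\<delta> * (b - \<tau>))) * (e + H \<tau>)"
      using k_int[OF \<tau>] h_bound[OF \<tau>] by (intro mult_mono) (auto simp: exp_add[symmetric])
    also have "\<dots> \<le> exp S * e * exp (-\<delta> * (b - \<tau>)) + exp S * H \<tau>"
    proof -
      have "exp (-\<delta> * (b - \<tau>)) * H \<tau> \<le> 1 * H \<tau>"
        using \<tau> \<delta> H_nonneg[OF \<tau>] by (intro mult_right_mono) auto
      then have "exp S * (exp (-\<delta> * (b - \<tau>)) * H \<tau>) \<le> exp S * H \<tau>"
        by (intro mult_left_mono) auto
      moreover have "(exp S * exp (-\<delta> * (b - \<tau>))) * (e + H \<tau>)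
          = exp S * e * exp (-\<delta> * (b - \<tau>)) + exp S * (exp (-\<delta> * (b - \<tau>)) * H \<tau>)"
        by (simp add: algebra_simps)
      ultimately show ?thesis
        by linarith
    qed
    finally show "exp (integral {\<tau>..b} k) * h \<tau> \<le> exp S * e * exp (-\<delta> * (b - \<tau>)) + exp S * H \<tau>" .
  qed
  also have "\<dots> = exp S * e * integral {a..b} (\<lambda>\<tau>. exp (-\<delta> * (b - \<tau>))) + exp S * integral {a..b} H"
    by (simp add: integral_linear_continuous_on continuous_intros cH)
  also have "\<dots> \<le> exp S * e * (1 / \<delta>) + exp S * e'"
    using integral_exp_decay_le[OF ab \<delta>] H_int \<open>0 \<le> e\<close> by (intro add_mono mult_left_mono) auto
  finally show ?thesis
    by (simp add: algebra_simps)
qed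

lemma continuous_induction_bound:
  fixes V :: "real \<Rightarrow> real"
  assumes cV: "continuous_on {t0..} V"
    and step: "\<And>b. t0 \<le> b \<Longrightarrow> \<forall>t\<in>{t0..<b}. V t \<le> B \<Longrightarrow> V b < B"
  shows "\<forall>t\<ge>t0. V t < B"
proof (rule ccontr)
  assume "\<not> (\<forall>t\<ge>t0. V t < B)"
  then obtain t2 where t2: "t0 \<le> t2" "B \<le> V t2" by auto
  define S where "S = {t0..t2} \<inter> V -` {B..}"
  have "closed S"
    unfolding S_def by (rule continuous_closed_preimage) (auto intro: continuous_on_subset[OF cV])
  moreover have "S \<noteq> {}"
    using t2 unfolding S_def by auto
  moreover have bdd: "bdd_below S"
    unfolding S_def by (auto intro: bdd_belowI[of _ t0])
  ultimately have "Inf S \<in> S"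
    by (intro closed_contains_Inf)
  then have first: "t0 \<le> Inf S" "B \<le> V (Inf S)"
    unfolding S_def by auto
  have "V t \<le> B" if t: "t \<in> {t0..<Inf S}" for t
  proof (rule ccontr)
    assume "\<not> V t \<le> B"
    then have "t \<in> S"
      using t \<open>Inf S \<in> S\<close> unfolding S_def by auto
    then show False
      using cInf_lower[OF _ bdd] t by fastforce
  qed
  then have "V (Inf S) < B"
    using step[OF first(1)] by blast
  then show False
    using first by simp
qed

lemma nonneg_integrable_tail_small:
  fixes h :: "real \<Rightarrow> real"
  assumes h_int: "h integrable_on {0..}" and h_nonneg: "\<And>t. 0 \<le> t \<Longrightarrow> 0 \<le> h t" and "0 < e"
  shows "\<exists>m\<ge>0. \<forall>a b. m \<le> a \<longrightarrow> a \<le> b \<longrightarrow> integral {a..b} h \<le> e"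
proof -
  define F where "F b = integral {0..b} h" for b
  have h_int': "h integrable_on {a..b}" if "0 \<le> a" for a b
    by (rule integrable_on_subinterval[OF h_int]) (use that in auto)
  have F_split: "F b = F a + integral {a..b} h" if "0 \<le> a" "a \<le> b" for a b
    unfolding F_def using that by (intro Henstock_Kurzweil_Integration.integral_combine[symmetric] h_int') auto
  have int_nonneg: "0 \<le> integral {a..b} h" if "0 \<le> a" for a b
    using h_int'[OF that] by (rule integral_nonneg) (use that h_nonneg in auto)
  have bdd: "bdd_above (F ` {0..})"
    unfolding F_def using h_int h_int' h_nonneg
    by (intro bdd_aboveI2[of _ _ "integral {0..} h"] integral_subset_le) auto
  define L where "L = (SUP b\<in>{0..}. F b)"
  have F_le: "F b \<le> L" if "0 \<le> b" for b
    unfolding L_def by (rule cSUP_upper[OF _ bdd]) (use that in auto)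
  obtain m where m: "0 \<le> m" "L - e < F m"
    using less_cSUP_iff[OF _ bdd, of "L - e"] \<open>0 < e\<close> unfolding L_def by fastforce
  show ?thesis
  proof (intro exI[of _ m] conjI allI impI)
    fix a b
    assume ab: "m \<le> a" "a \<le> b"
    have "F m \<le> F a"
      using F_split[of m a] int_nonneg[of m a] m ab by auto
    moreover have "F b = F a + integral {a..b} h"
      using F_split[of a b] m ab by auto
    moreover have "F b \<le> L"
      using F_le[of b] m ab by auto
    ultimately show "integral {a..b} h \<le> e"
      using m by linarith
  qed (use m in auto)
qed

lemma tendsto_zero_of_weighted:
  fixes h w :: "real \<Rightarrow> real"
  assumes "((\<lambda>t. h t * w t) \<longlongrightarrow> 0) at_top"
    and w_ge: "\<And>t. 1 \<le> t \<Longrightarrow> 1 \<le> w t" and h_nonneg: "\<And>t. 0 \<le> t \<Longrightarrow> 0 \<le> h t"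
  shows "(h \<longlongrightarrow> 0) at_top"
proof (rule tendsto_sandwich[OF _ _ tendsto_const assms(1)])
  show "\<forall>\<^sub>F t in at_top. 0 \<le> h t"
    using eventually_ge_at_top[of 0] by eventually_elim (rule h_nonneg)
  show "\<forall>\<^sub>F t in at_top. h t \<le> h t * w t"
    using eventually_ge_at_top[of 1]
  proof eventually_elim
    case (elim t)
    then show ?case
      using mult_left_mono[OF w_ge[OF elim] h_nonneg] by simp
  qed
qed

lemma weighted_integrable_tail_small:
  fixes h w :: "real \<Rightarrow> real"
  assumes hw_int: "(\<lambda>t. h t * w t) integrable_on {0..}" and ch: "continuous_on {0..} h"
    and h_nonneg: "\<And>t. 0 \<le> t \<Longrightarrow> 0 \<le> h t" and w_nonneg: "\<And>t. 0 \<le> t \<Longrightarrow> 0 \<le> w t"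
    and w_ge: "\<And>t. 1 \<le> t \<Longrightarrow> 1 \<le> w t" and "0 < e"
  shows "\<exists>m. \<forall>a b. m \<le> a \<longrightarrow> a \<le> b \<longrightarrow> integral {a..b} h \<le> e"
proof -
  obtain m where m: "m \<ge> 0" "\<forall>a b. m \<le> a \<longrightarrow> a \<le> b \<longrightarrow> integral {a..b} (\<lambda>t. h t * w t) \<le> e"
    using nonneg_integrable_tail_small[OF hw_int _ \<open>0 < e\<close>] h_nonneg w_nonneg by auto
  show ?thesis
  proof (intro exI[of _ "max m 1"] allI impI)
    fix a b
    assume ab: "max m 1 \<le> a" "a \<le> b"
    have "integral {a..b} h \<le> integral {a..b} (\<lambda>t. h t * w t)"
    proof (rule integral_le)
      show "h integrable_on {a..b}"
        by (rule integrable_continuous_interval, rule continuous_on_subset[OF ch]) (use ab in auto)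
      show "(\<lambda>t. h t * w t) integrable_on {a..b}"
        by (rule integrable_on_subinterval[OF hw_int]) (use ab in auto)
    next
      fix t
      assume "t \<in> {a..b}"
      then have "1 \<le> t" using ab by auto
      then show "h t \<le> h t * w t"
        using mult_left_mono[OF w_ge h_nonneg] by simp
    qed
    also have "\<dots> \<le> e"
      using m ab by auto
    finally show "integral {a..b} h \<le> e" .
  qed
qed

lemma tpow_weight_ge_1:
  assumes "1 \<le> t" and "chi > kap \<longrightarrow> \<xi> > 0" and "chi \<le> kap \<longrightarrow> \<xi> = 0"
  shows "1 \<le> exp (\<xi> * (tpow t chi - tpow t kap))"
proof (cases "chi > kap")
  case True
  then have "t powr kap \<le> t powr chi"
    using assms(1) by (intro powr_mono) auto
  then show ?thesis
    using True assms unfolding tpow_def by auto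
qed (use assms in simp)

section \<open>Solutions\<close>

lemma continuous_on_slice:
  assumes "continuous_on (A \<times> B) (\<lambda>(x, t). w x t)" "t \<in> B"
  shows "continuous_on A (\<lambda>x. w x t)"
proof -
  have "continuous_on A (\<lambda>x. (\<lambda>(x, t). w x t) (x, t))"
    by (rule continuous_on_compose2[OF assms(1)]) (use assms(2) in \<open>auto intro!: continuous_intros\<close>)
  then show ?thesis by simp
qed

lemma continuous_on_swap_args:
  assumes "continuous_on (A \<times> B) (\<lambda>(x, t). w x t)"
  shows "continuous_on (B \<times> A) (\<lambda>(t, x). w x t)"
proof -
  have "continuous_on (B \<times> A) (\<lambda>p. (\<lambda>(x, t). w x t) (snd p, fst p))"
    by (rule continuous_on_compose2[OF assms]) (auto intro!: continuous_intros)
  then show ?thesis by (simp add: case_prod_beta')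
qed

locale pde_solution =
  fixes \<epsilon> :: real and f :: "real \<Rightarrow> real \<Rightarrow> real \<Rightarrow> real \<Rightarrow> real \<Rightarrow> real \<Rightarrow> real"
    and t0 :: real and u ux uxx ut uxt uxxt utt :: "real \<Rightarrow> real \<Rightarrow> real"
  assumes solution: "is_solution \<epsilon> f t0 u ux uxx ut uxt uxxt utt" and eps: "\<epsilon> > 0"
begin

lemma joint_continuous:
  "continuous_on ({0..1} \<times> {t0..}) (\<lambda>(x, t). u x t)"
  "continuous_on ({0..1} \<times> {t0..}) (\<lambda>(x, t). ux x t)"
  "continuous_on ({0..1} \<times> {t0..}) (\<lambda>(x, t). uxx x t)"
  "continuous_on ({0..1} \<times> {t0..}) (\<lambda>(x, t). ut x t)"
  "continuous_on ({0..1} \<times> {t0..}) (\<lambda>(x, t). uxt x t)"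
  "continuous_on ({0..1} \<times> {t0..}) (\<lambda>(x, t). uxxt x t)"
  "continuous_on ({0..1} \<times> {t0..}) (\<lambda>(x, t). utt x t)"
  using solution unfolding is_solution_def by auto

lemma slice_continuous:
  assumes "t0 \<le> t"
  shows "continuous_on {0..1} (\<lambda>x. u x t)" "continuous_on {0..1} (\<lambda>x. ux x t)"
    "continuous_on {0..1} (\<lambda>x. uxx x t)" "continuous_on {0..1} (\<lambda>x. ut x t)"
    "continuous_on {0..1} (\<lambda>x. uxt x t)" "continuous_on {0..1} (\<lambda>x. uxxt x t)"
    "continuous_on {0..1} (\<lambda>x. utt x t)"
  using joint_continuous[THEN continuous_on_slice] assms by auto

lemma x_derivatives:
  assumes "t0 \<le> t" "x \<in> {0..1}"
  shows "((\<lambda>y. u y t) has_real_derivative ux x t) (at x within {0..1})"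
    "((\<lambda>y. ux y t) has_real_derivative uxx x t) (at x within {0..1})"
    "((\<lambda>y. ut y t) has_real_derivative uxt x t) (at x within {0..1})"
    "((\<lambda>y. uxt y t) has_real_derivative uxxt x t) (at x within {0..1})"
  using solution assms unfolding is_solution_def by auto

lemma t_derivatives:
  assumes "t0 \<le> t" "x \<in> {0..1}"
  shows "((\<lambda>s. u x s) has_real_derivative ut x t) (at t within {t0..})"
    "((\<lambda>s. ux x s) has_real_derivative uxt x t) (at t within {t0..})"
    "((\<lambda>s. uxx x s) has_real_derivative uxxt x t) (at t within {t0..})"
    "((\<lambda>s. ut x s) has_real_derivative utt x t) (at t within {t0..})"
  using solution assms unfolding is_solution_def by auto

lemma boundary:
  assumes "t0 \<le> t"
  shows "u 0 t = 0" "u 1 t = 0"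
  using solution assms unfolding is_solution_def by auto

lemma equation:
  assumes "x \<in> {0<..<1}" "t0 < t"
  shows "utt x t = f x t (u x t) (ux x t) (uxx x t) (ut x t) + \<epsilon> * uxxt x t + uxx x t"
  using solution assms unfolding is_solution_def by (auto simp: algebra_simps)

lemma ut_boundary:
  assumes "t0 < t" "x = 0 \<or> x = 1"
  shows "ut x t = 0"
proof -
  have x: "x \<in> {0..1}" using assms by auto
  have "((\<lambda>s. u x s) has_real_derivative ut x t) (at t within {t0<..})"
    by (rule has_field_derivative_subset[OF t_derivatives(1)[OF _ x]]) (use assms in auto)
  then have "((\<lambda>s. u x s) has_real_derivative ut x t) (at t)"
    using assms at_within_open[of t "{t0<..}"] by simp
  moreover have "((\<lambda>s. u x s) has_real_derivative 0) (at t)"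
    by (rule has_field_derivative_transform_within_open[OF DERIV_const, of "{t0<..}"])
      (use assms boundary in auto)
  ultimately show ?thesis
    using DERIV_unique by blast
qed

lemma slice_in_Gamma:
  assumes "t0 < t"
  shows "in_Gamma (\<lambda>x. u x t) (\<lambda>x. ux x t) (\<lambda>x. uxx x t) (\<lambda>x. ut x t)"
  unfolding in_Gamma_def
  using x_derivatives[of t] slice_continuous[of t] boundary[of t] ut_boundary[OF assms] assms by auto

definition lyap :: "real \<Rightarrow> real" where
  "lyap t = lyapunov \<epsilon> (\<lambda>x. ux x t) (\<lambda>x. uxx x t) (\<lambda>x. ut x t)"

definition dist2 :: "real \<Rightarrow> real" where
  "dist2 t = dsq (\<lambda>x. u x t) (\<lambda>x. ux x t) (\<lambda>x. uxx x t) (\<lambda>x. ut x t)"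

lemma dsol_eq: "dsol u ux uxx ut t = sqrt (dist2 t)"
  unfolding dsol_def dist2_def ..

lemma lyap_has_derivative:
  assumes t: "t0 \<le> t"
  shows "(lyap has_real_derivative
    lyapunov_deriv \<epsilon> (\<lambda>x. ux x t) (\<lambda>x. uxx x t) (\<lambda>x. ut x t) (\<lambda>x. uxt x t) (\<lambda>x. uxxt x t)
      (\<lambda>x. utt x t)) (at t within {t0..})"
proof -
  have "((\<lambda>s. integral (cbox 0 1)
      (\<lambda>x. (ut x s)^2 + (ux x s)^2 + \<epsilon>^2/2 * (uxx x s)^2 - \<epsilon> * (ut x s * uxx x s)))
    has_field_derivative integral (cbox 0 1) (\<lambda>x. 2 * (ut x t * utt x t) + 2 * (ux x t * uxt x t)
      + \<epsilon>^2/2 * (2 * (uxx x t * uxxt x t)) - \<epsilon> * (utt x t * uxx x t + ut x t * uxxt x t)))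
    (at t within {t0..})"
  proof (rule leibniz_rule_field_derivative)
    fix s x :: real
    assume "s \<in> {t0..}" "x \<in> cbox 0 1"
    then have s: "t0 \<le> s" and x: "x \<in> {0..1}" by auto
    show "((\<lambda>s. (ut x s)^2 + (ux x s)^2 + \<epsilon>^2/2 * (uxx x s)^2 - \<epsilon> * (ut x s * uxx x s))
        has_field_derivative 2 * (ut x s * utt x s) + 2 * (ux x s * uxt x s)
          + \<epsilon>^2/2 * (2 * (uxx x s * uxxt x s)) - \<epsilon> * (utt x s * uxx x s + ut x s * uxxt x s))
        (at s within {t0..})"
      using t_derivatives[OF s x] by (auto intro!: derivative_eq_intros simp: algebra_simps)
  next
    fix s :: real
    assume "s \<in> {t0..}"
    then show "(\<lambda>x. (ut x s)^2 + (ux x s)^2 + \<epsilon>^2/2 * (uxx x s)^2 - \<epsilon> * (ut x s * uxx x s))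
        integrable_on cbox 0 1"
      unfolding cbox_interval
      by (intro integrable_continuous_interval continuous_intros slice_continuous) auto
  next
    show "continuous_on ({t0..} \<times> cbox 0 1) (\<lambda>(s, x). 2 * (ut x s * utt x s) + 2 * (ux x s * uxt x s)
        + \<epsilon>^2/2 * (2 * (uxx x s * uxxt x s)) - \<epsilon> * (utt x s * uxx x s + ut x s * uxxt x s))"
      unfolding cbox_interval split_beta
      by (intro continuous_intros joint_continuous[THEN continuous_on_swap_args, unfolded split_beta])
  qed (use t in auto)
  then show ?thesis
    unfolding lyap_def[abs_def] lyapunov_def lyapunov_deriv_def cbox_interval .
qed

lemma lyap_continuous: "continuous_on {t0..} lyap"
  by (rule DERIV_continuous_on, rule lyap_has_derivative) simp

lemma dist2_nonneg: "t0 \<le> t \<Longrightarrow> 0 \<le> dist2 t"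
  unfolding dist2_def dsq_def
  by (intro integral_nonneg integrable_continuous_interval continuous_intros slice_continuous) auto

lemma lyap_lower: "t0 \<le> t \<Longrightarrow> 28/25 * c1sq \<epsilon> * dist2 t \<le> lyap t"
  unfolding lyap_def dist2_def
  by (intro lyapunov_lower_bound eps x_derivatives slice_continuous boundary) auto

lemma lyap_upper: "t0 \<le> t \<Longrightarrow> lyap t \<le> c2sq \<epsilon> * dist2 t"
  unfolding lyap_def dist2_def
  by (intro lyapunov_upper_bound eps slice_continuous)

lemma lyap_nonneg:
  assumes "t0 \<le> t"
  shows "0 \<le> lyap t"
proof -
  have "0 \<le> 28/25 * c1sq \<epsilon> * dist2 t"
    using c1sq_bounds[OF eps] dist2_nonneg[OF assms] by simp
  then show ?thesis
    using lyap_lower[OF assms] by linarith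
qed


lemma lyap_le_dsol:
  assumes "t0 \<le> t"
  shows "lyap t \<le> c2sq \<epsilon> * (dsol u ux uxx ut t)^2"
  using lyap_upper[OF assms] dist2_nonneg[OF assms] by (simp add: dsol_eq)

lemma dsol_less_sqrt:
  assumes "t0 \<le> t" "lyap t < 28/25 * c1sq \<epsilon> * r"
  shows "dsol u ux uxx ut t < sqrt r"
proof -
  have "28/25 * c1sq \<epsilon> * dist2 t < 28/25 * c1sq \<epsilon> * r"
    using lyap_lower[OF assms(1)] assms(2) by linarith
  then have "dist2 t < r"
    using c1sq_bounds[OF eps] by simp
  then show ?thesis
    by (simp add: dsol_eq)
qed
end

section \<open>Stability under the hypotheses of the theorem\<close>

text \<open>The hypotheses of the theorem, with \<open>\<sigma>\<close> from condition (i) and condition (iii) replaced by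
  the two consequences that are used.\<close>
locale stability_setting =
  fixes \<epsilon> :: real and f :: "real \<Rightarrow> real \<Rightarrow> real \<Rightarrow> real \<Rightarrow> real \<Rightarrow> real \<Rightarrow> real"
    and g :: "real \<Rightarrow> real" and g1 g2 :: "real \<Rightarrow> real \<Rightarrow> real" and \<sigma> :: real
  assumes eps: "\<epsilon> > 0"
    and f_cont: "continuous_on UNIV (\<lambda>(x, t, n, p, q, r). f x t n p q r)"
    and g_cont: "continuous_on {0..} g" and g_nonneg: "\<And>t. 0 \<le> t \<Longrightarrow> 0 \<le> g t"
    and g1_cont: "continuous_on ({0..} \<times> {0<..}) (\<lambda>(t, \<eta>). g1 t \<eta>)"
    and g2_cont: "continuous_on ({0..} \<times> {0<..}) (\<lambda>(t, \<eta>). g2 t \<eta>)"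
    and g1_nonneg: "\<And>t \<eta>. 0 \<le> t \<Longrightarrow> 0 < \<eta> \<Longrightarrow> 0 \<le> g1 t \<eta>"
    and g2_nonneg: "\<And>t \<eta>. 0 \<le> t \<Longrightarrow> 0 < \<eta> \<Longrightarrow> 0 \<le> g2 t \<eta>"
    and g1_mono: "\<And>t a b. 0 \<le> t \<Longrightarrow> 0 < a \<Longrightarrow> a \<le> b \<Longrightarrow> g1 t a \<le> g1 t b"
    and g2_mono: "\<And>t a b. 0 \<le> t \<Longrightarrow> 0 < a \<Longrightarrow> a \<le> b \<Longrightarrow> g2 t a \<le> g2 t b"
    and f_bound: "\<And>t \<phi> \<phi>' \<phi>'' \<psi>. 0 \<le> t \<Longrightarrow> in_Gamma \<phi> \<phi>' \<phi>'' \<psi> \<Longrightarrow>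
        (\<epsilon>/2 + 2/\<epsilon>) * integral {0..1} (\<lambda>x. (f x t (\<phi> x) (\<phi>' x) (\<phi>'' x) (\<psi> x))^2)
          \<le> g t * c1sq \<epsilon> * dsq \<phi> \<phi>' \<phi>'' \<psi> + g1 t (dsq \<phi> \<phi>' \<phi>'' \<psi>) + g2 t (dsq \<phi> \<phi>' \<phi>'' \<psi>)"
    and g_integral_le: "\<And>t0 t. 0 \<le> t0 \<Longrightarrow> t0 \<le> t \<Longrightarrow> integral {t0..t} g - pconst \<epsilon> * (t - t0) \<le> \<sigma>"
    and g1_vanishes: "\<And>\<eta>. 0 < \<eta> \<Longrightarrow> ((\<lambda>t. g1 t \<eta>) \<longlongrightarrow> 0) at_top"
    and g2_tail_small: "\<And>\<eta> e. 0 < \<eta> \<Longrightarrow> 0 < e \<Longrightarrow>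
        \<exists>m. \<forall>a b. m \<le> a \<longrightarrow> a \<le> b \<longrightarrow> integral {a..b} (\<lambda>t. g2 t \<eta>) \<le> e"
begin

text \<open>Along solutions \<open>V' \<le> growth t * V + g1 t \<eta> + g2 t \<eta>\<close>, and condition (i) bounds the
  integral of \<open>growth\<close> in terms of \<open>decay\<close>, whose positivity is where \<open>p = c\<^sub>3\<^sup>2/c\<^sub>2\<^sup>2\<close> enters.\<close>
definition rate :: real where
  "rate = 32 * \<epsilon> / (73 * c2sq \<epsilon>)"

definition decay :: real where
  "decay = rate - 25/28 * pconst \<epsilon>"

definition growth :: "real \<Rightarrow> real" where
  "growth t = 25/28 * g t - rate"

definition overshoot :: real where
  "overshoot = 25/28 * \<sigma>"

lemma decay_pos: "0 < decay"
proof -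
  have "decay = \<epsilon> * (32/73 - 25/56 * omega2) / c2sq \<epsilon>"
    using c2sq_pos[of \<epsilon>] unfolding decay_def rate_def pconst_def c3sq_def by (simp add: field_simps)
  moreover have "0 < 32/73 - 25/56 * omega2"
    using omega2_less by simp
  ultimately show ?thesis
    using eps c2sq_pos[of \<epsilon>] by simp
qed

lemma growth_continuous: "continuous_on {0..} growth"
  unfolding growth_def by (intro continuous_intros g_cont)

lemma growth_integral_le:
  assumes "0 \<le> \<tau>" "\<tau> \<le> b"
  shows "integral {\<tau>..b} growth \<le> overshoot - decay * (b - \<tau>)"
proof -
  have "continuous_on {\<tau>..b} g"
    by (rule continuous_on_subset[OF g_cont]) (use assms in auto)
  then have "integral {\<tau>..b} growth = integral {\<tau>..b} (\<lambda>t. 25/28 * g t) - integral {\<tau>..b} (\<lambda>t. rate)"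
    unfolding growth_def by (intro integral_diff_continuous_on continuous_intros)
  also have "\<dots> = 25/28 * integral {\<tau>..b} g - rate * (b - \<tau>)"
    using assms by (simp add: integral_mult_right)
  also have "\<dots> \<le> 25/28 * (\<sigma> + pconst \<epsilon> * (b - \<tau>)) - rate * (b - \<tau>)"
    using g_integral_le[OF assms] by simp
  also have "\<dots> = overshoot - decay * (b - \<tau>)"
    unfolding overshoot_def decay_def by (simp add: field_simps)
  finally show ?thesis .
qed

lemma g1_slice_continuous: "0 < \<eta> \<Longrightarrow> continuous_on {0..} (\<lambda>t. g1 t \<eta>)"
  using g1_cont by (rule continuous_on_slice) simp

lemma g2_slice_continuous: "0 < \<eta> \<Longrightarrow> continuous_on {0..} (\<lambda>t. g2 t \<eta>)"
  using g2_cont by (rule continuous_on_slice) simp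

lemma perturbations_eventually_small:
  assumes "0 < \<eta>" "0 < c"
  obtains e m where "0 \<le> e" "0 \<le> m" "exp overshoot * (e / decay + e) = c"
    "\<And>t. m \<le> t \<Longrightarrow> g1 t \<eta> \<le> e"
    "\<And>a b. m \<le> a \<Longrightarrow> a \<le> b \<Longrightarrow> integral {a..b} (\<lambda>t. g2 t \<eta>) \<le> e"
proof -
  define k where "k = exp overshoot * (1 / decay + 1)"
  have "0 < k"
    unfolding k_def using decay_pos by (simp add: add_pos_pos)
  define e where "e = c / k"
  have "0 < e"
    unfolding e_def using assms \<open>0 < k\<close> by simp
  obtain m1 where m1: "\<And>t. m1 \<le> t \<Longrightarrow> g1 t \<eta> < e"
    using order_tendstoD(2)[OF g1_vanishes[OF assms(1)] \<open>0 < e\<close>]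
    unfolding eventually_at_top_linorder by blast
  obtain m2 where m2: "\<And>a b. m2 \<le> a \<Longrightarrow> a \<le> b \<Longrightarrow> integral {a..b} (\<lambda>t. g2 t \<eta>) \<le> e"
    using g2_tail_small[OF assms(1) \<open>0 < e\<close>] by blast
  have "exp overshoot * (e / decay + e) = e * k"
    unfolding k_def by (simp add: algebra_simps)
  also have "\<dots> = c"
    unfolding e_def using \<open>0 < k\<close> by simp
  finally have "exp overshoot * (e / decay + e) = c" .
  then show ?thesis
    using m1 m2 \<open>0 < e\<close>
    by (intro that[of e "max 0 (max m1 m2)"]) (auto intro: less_imp_le)
qed

end

locale setting_solution =
  stability_setting \<epsilon> f g g1 g2 \<sigma> + pde_solution \<epsilon> f t0 u ux uxx ut uxt uxxt utt
  for \<epsilon> f g g1 g2 \<sigma> t0 u ux uxx ut uxt uxxt utt +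
  assumes t0_nonneg: "0 \<le> t0"
begin

lemma lyap_deriv_le:
  assumes t: "t0 < t"
  shows "lyapunov_deriv \<epsilon> (\<lambda>x. ux x t) (\<lambda>x. uxx x t) (\<lambda>x. ut x t) (\<lambda>x. uxt x t) (\<lambda>x. uxxt x t)
      (\<lambda>x. utt x t)
    \<le> (\<epsilon>/2 + 2/\<epsilon>) * integral {0..1} (\<lambda>x. (f x t (u x t) (ux x t) (uxx x t) (ut x t))^2)
      - 32 * \<epsilon> / 73 * dist2 t"
  unfolding dist2_def
proof (rule lyapunov_deriv_bound[OF eps])
  have t': "t0 \<le> t" using t by simp
  have "continuous_on {0..1} (\<lambda>x. (\<lambda>(x, t, n, p, q, r). f x t n p q r)
      (x, t, u x t, ux x t, uxx x t, ut x t))"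
    by (rule continuous_on_compose2[OF f_cont]) (auto intro!: continuous_intros slice_continuous t')
  then show "continuous_on {0..1} (\<lambda>x. f x t (u x t) (ux x t) (uxx x t) (ut x t))"
    by simp
qed (use t x_derivatives slice_continuous boundary ut_boundary equation in auto)

lemma lyap_deriv_le_growth:
  assumes t: "t0 < t" and pos: "0 < dist2 t" and "dist2 t \<le> \<eta>"
  shows "lyapunov_deriv \<epsilon> (\<lambda>x. ux x t) (\<lambda>x. uxx x t) (\<lambda>x. ut x t) (\<lambda>x. uxt x t) (\<lambda>x. uxxt x t)
      (\<lambda>x. utt x t)
    \<le> growth t * lyap t + (g1 t \<eta> + g2 t \<eta>)"
proof -
  have t': "t0 \<le> t" and t_nonneg: "0 \<le> t"
    using t t0_nonneg by auto
  have "g1 t (dist2 t) + g2 t (dist2 t) \<le> g1 t \<eta> + g2 t \<eta>"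
    using g1_mono g2_mono t_nonneg pos \<open>dist2 t \<le> \<eta>\<close> by (simp add: add_mono)
  moreover have "(\<epsilon>/2 + 2/\<epsilon>) * integral {0..1} (\<lambda>x. (f x t (u x t) (ux x t) (uxx x t) (ut x t))^2)
      \<le> g t * c1sq \<epsilon> * dist2 t + g1 t (dist2 t) + g2 t (dist2 t)"
    unfolding dist2_def using t_nonneg slice_in_Gamma[OF t] by (rule f_bound)
  moreover have "g t * (c1sq \<epsilon> * dist2 t) \<le> g t * (25/28 * lyap t)"
    using lyap_lower[OF t'] g_nonneg[OF t_nonneg] by (intro mult_left_mono) auto
  moreover have "rate * lyap t \<le> 32 * \<epsilon> / 73 * dist2 t"
    using lyap_upper[OF t'] c2sq_pos[of \<epsilon>] eps unfolding rate_def
    by (simp add: field_simps mult_left_mono)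
  ultimately show ?thesis
    using lyap_deriv_le[OF t] unfolding growth_def by (simp add: algebra_simps)
qed

lemma lyap_differential_inequality:
  assumes t: "t0 < t" and \<eta>: "0 < \<eta>" and below: "lyap t \<le> 28/25 * c1sq \<epsilon> * \<eta>"
  shows "\<exists>D. (lyap has_real_derivative D) (at t) \<and> D \<le> growth t * lyap t + (g1 t \<eta> + g2 t \<eta>)"
proof -
  have t': "t0 \<le> t"
    using t by simp
  define D where "D = lyapunov_deriv \<epsilon> (\<lambda>x. ux x t) (\<lambda>x. uxx x t) (\<lambda>x. ut x t) (\<lambda>x. uxt x t)
    (\<lambda>x. uxxt x t) (\<lambda>x. utt x t)"
  have "(lyap has_real_derivative D) (at t within {t0<..})"
    unfolding D_def by (rule has_field_derivative_subset[OF lyap_has_derivative[OF t']]) auto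
  then have dV: "(lyap has_real_derivative D) (at t)"
    using t at_within_open[of t "{t0<..}"] by simp
  moreover have "D \<le> growth t * lyap t + (g1 t \<eta> + g2 t \<eta>)"
  proof (cases "dist2 t = 0")
    case True
    \<comment> \<open>\<open>g1 t\<close> and \<open>g2 t\<close> are only controlled at positive arguments; here instead \<open>lyap\<close>
      attains its minimum 0 at \<open>t\<close>.\<close>
    then have "lyap t = 0"
      using lyap_upper[OF t'] lyap_nonneg[OF t'] by simp
    then have "D = 0"
      using lyap_nonneg t by (intro DERIV_local_min[OF dV, of "t - t0"]) auto
    then show ?thesis
      using g1_nonneg g2_nonneg t t0_nonneg \<eta> \<open>lyap t = 0\<close> by (simp add: add_nonneg_nonneg)
  next
    case False
    have "28/25 * c1sq \<epsilon> * dist2 t \<le> 28/25 * c1sq \<epsilon> * \<eta>"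
      using lyap_lower[OF t'] below by linarith
    then have "dist2 t \<le> \<eta>"
      using c1sq_bounds[OF eps] by simp
    then show ?thesis
      unfolding D_def using t False dist2_nonneg[OF t'] by (intro lyap_deriv_le_growth) auto
  qed
  ultimately show ?thesis
    by blast
qed

lemma lyap_decay:
  assumes \<eta>: "0 < \<eta>" and ab: "t0 \<le> a" "a \<le> b"
    and below: "\<forall>t\<in>{a<..<b}. lyap t \<le> 28/25 * c1sq \<epsilon> * \<eta>"
    and g1_le: "\<forall>t\<in>{a..b}. g1 t \<eta> \<le> e" and "0 \<le> e"
    and g2_int: "integral {a..b} (\<lambda>t. g2 t \<eta>) \<le> e'"
  shows "lyap b \<le> exp overshoot * (exp (- decay * (b - a)) * lyap a + e / decay + e')"
proof (rule linear_differential_inequality_decay[OF ab(2) decay_pos])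
  have sub: "{a..b} \<subseteq> {0..}"
    using ab t0_nonneg by auto
  show "continuous_on {a..b} lyap"
    using lyap_continuous by (rule continuous_on_subset) (use ab in auto)
  show "continuous_on {a..b} growth"
    using growth_continuous sub by (rule continuous_on_subset)
  show "continuous_on {a..b} (\<lambda>t. g1 t \<eta> + g2 t \<eta>)" "continuous_on {a..b} (\<lambda>t. g2 t \<eta>)"
    using g1_slice_continuous[OF \<eta>] g2_slice_continuous[OF \<eta>] sub
    by (auto intro!: continuous_intros intro: continuous_on_subset)
  show "\<exists>D. (lyap has_real_derivative D) (at t) \<and> D \<le> growth t * lyap t + (g1 t \<eta> + g2 t \<eta>)"
    if "t \<in> {a<..<b}" for t
    using that below ab by (intro lyap_differential_inequality \<eta>) auto
  show "integral {\<tau>..b} growth \<le> overshoot - decay * (b - \<tau>)" if "\<tau> \<in> {a..b}" for \<tau>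
    using that sub by (intro growth_integral_le) auto
  show "0 \<le> g1 t \<eta> + g2 t \<eta> \<and> g1 t \<eta> + g2 t \<eta> \<le> e + g2 t \<eta>"
    "0 \<le> g2 t \<eta>" if "t \<in> {a..b}" for t
    using that sub g1_le g1_nonneg g2_nonneg \<eta> by (auto simp: add_nonneg_nonneg)
  show "0 \<le> lyap a"
    using ab by (intro lyap_nonneg)
qed (use assms in auto)

lemma lyap_stays_below:
  assumes \<eta>: "0 < \<eta>" and "0 \<le> e" and g1_le: "\<forall>t\<ge>t0. g1 t \<eta> \<le> e"
    and g2_int: "\<forall>a b. t0 \<le> a \<longrightarrow> a \<le> b \<longrightarrow> integral {a..b} (\<lambda>t. g2 t \<eta>) \<le> e'"
    and start: "exp overshoot * (lyap t0 + e / decay + e') < 28/25 * c1sq \<epsilon> * \<eta>"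
  shows "\<forall>t\<ge>t0. lyap t < 28/25 * c1sq \<epsilon> * \<eta>"
  using lyap_continuous
proof (rule continuous_induction_bound)
  fix b
  assume b: "t0 \<le> b" and below: "\<forall>t\<in>{t0..<b}. lyap t \<le> 28/25 * c1sq \<epsilon> * \<eta>"
  have "lyap b \<le> exp overshoot * (exp (- decay * (b - t0)) * lyap t0 + e / decay + e')"
    using \<eta> b below g1_le g2_int \<open>0 \<le> e\<close> by (intro lyap_decay) auto
  also have "\<dots> \<le> exp overshoot * (1 * lyap t0 + e / decay + e')"
    using b decay_pos lyap_nonneg[of t0] by (intro mult_left_mono add_right_mono mult_right_mono) auto
  also have "\<dots> < 28/25 * c1sq \<epsilon> * \<eta>"
    using start by simp
  finally show "lyap b < 28/25 * c1sq \<epsilon> * \<eta>" .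
qed

lemma lyap_decay_from_bound:
  assumes \<eta>: "0 < \<eta>" and bounded: "\<forall>t'\<ge>t0. lyap t' < 28/25 * c1sq \<epsilon> * \<eta>" and "0 \<le> e"
    and g1_le: "\<forall>t'\<ge>m. g1 t' \<eta> \<le> e"
    and g2_int: "\<forall>a b. m \<le> a \<longrightarrow> a \<le> b \<longrightarrow> integral {a..b} (\<lambda>t'. g2 t' \<eta>) \<le> e"
    and "t0 \<le> t - h" "m \<le> t - h" "0 \<le> h"
  shows "lyap t \<le> exp overshoot * (28/25 * c1sq \<epsilon> * \<eta>) * exp (- decay * h)
    + exp overshoot * (e / decay + e)"
proof -
  have "lyap t \<le> exp overshoot * (exp (- decay * (t - (t - h))) * lyap (t - h) + e / decay + e)"
    using assms by (intro lyap_decay) (auto intro: less_imp_le)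
  also have "\<dots> = exp overshoot * exp (- decay * h) * lyap (t - h) + exp overshoot * (e / decay + e)"
    by (simp add: algebra_simps)
  also have "exp overshoot * exp (- decay * h) * lyap (t - h)
      \<le> exp overshoot * exp (- decay * h) * (28/25 * c1sq \<epsilon> * \<eta>)"
    using bounded \<open>t0 \<le> t - h\<close> by (intro mult_left_mono) (auto intro: less_imp_le)
  finally show ?thesis
    by (simp add: mult_ac)
qed

end

context stability_setting
begin

lemma setting_solutionI:
  assumes "is_solution \<epsilon> f t0 u ux uxx ut uxt uxxt utt" "0 \<le> t0"
  shows "setting_solution \<epsilon> f g g1 g2 \<sigma> t0 u ux uxx ut uxt uxxt utt"
  using stability_setting_axioms assms eps
  by (simp add: setting_solution_def setting_solution_axioms_def pde_solution_def)

lemma lyap_uniformly_bounded: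
  assumes "0 < \<alpha>"
  obtains s \<eta> where "0 \<le> s" "0 < \<eta>"
    "\<And>t0 u ux uxx ut uxt uxxt utt t. s \<le> t0 \<Longrightarrow> is_solution \<epsilon> f t0 u ux uxx ut uxt uxxt utt \<Longrightarrow>
      dsol u ux uxx ut t0 \<le> \<alpha> \<Longrightarrow> t0 \<le> t \<Longrightarrow>
      lyapunov \<epsilon> (\<lambda>x. ux x t) (\<lambda>x. uxx x t) (\<lambda>x. ut x t) < 28/25 * c1sq \<epsilon> * \<eta>"
proof -
  have c1: "0 < c1sq \<epsilon>"
    using c1sq_bounds[OF eps] by simp
  \<comment> \<open>The level exceeds \<open>exp overshoot * V(t0)\<close> by more than the budget 1 for the perturbations.\<close>
  define \<eta> where "\<eta> = (exp overshoot * (c2sq \<epsilon> * \<alpha>^2) + 2) / (28/25 * c1sq \<epsilon>)"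
  have level: "28/25 * c1sq \<epsilon> * \<eta> = exp overshoot * (c2sq \<epsilon> * \<alpha>^2) + 2"
    unfolding \<eta>_def using c1 by simp
  have "0 < \<eta>"
    unfolding \<eta>_def using c1 c2sq_pos[of \<epsilon>] by (simp add: add_nonneg_pos)
  obtain e m where e: "0 \<le> e" "0 \<le> m" "exp overshoot * (e / decay + e) = 1"
    and g1_le: "\<And>t. m \<le> t \<Longrightarrow> g1 t \<eta> \<le> e"
    and g2_int: "\<And>a b. m \<le> a \<Longrightarrow> a \<le> b \<Longrightarrow> integral {a..b} (\<lambda>t. g2 t \<eta>) \<le> e"
    using perturbations_eventually_small[OF \<open>0 < \<eta>\<close>, of 1] by auto
  show ?thesis
  proof (rule that[OF e(2) \<open>0 < \<eta>\<close>])
    fix t0 u ux uxx ut uxt uxxt utt t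
    assume t0: "m \<le> t0" and sol: "is_solution \<epsilon> f t0 u ux uxx ut uxt uxxt utt"
      and init: "dsol u ux uxx ut t0 \<le> \<alpha>" and t: "t0 \<le> t"
    interpret setting_solution \<epsilon> f g g1 g2 \<sigma> t0 u ux uxx ut uxt uxxt utt
      using sol t0 e(2) by (intro setting_solutionI) auto
    have "(dsol u ux uxx ut t0)^2 \<le> \<alpha>^2"
      using init by (intro power_mono) (simp_all add: dsol_eq dist2_nonneg)
    then have "lyap t0 \<le> c2sq \<epsilon> * \<alpha>^2"
      using lyap_le_dsol[of t0] c2sq_pos[of \<epsilon>] by (smt (verit) mult_left_mono)
    then have "exp overshoot * lyap t0 \<le> exp overshoot * (c2sq \<epsilon> * \<alpha>^2)"
      by (rule mult_left_mono) simp
    moreover have "exp overshoot * (lyap t0 + e / decay + e) = exp overshoot * lyap t0 + exp overshoot * (e / decay + e)"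
      by (simp add: algebra_simps)
    ultimately have "exp overshoot * (lyap t0 + e / decay + e) < 28/25 * c1sq \<epsilon> * \<eta>"
      using e(3) level by linarith
    then have "\<forall>t\<ge>t0. lyap t < 28/25 * c1sq \<epsilon> * \<eta>"
      using g1_le g2_int t0 e(1) \<open>0 < \<eta>\<close> by (intro lyap_stays_below) auto
    then show "lyapunov \<epsilon> (\<lambda>x. ux x t) (\<lambda>x. uxx x t) (\<lambda>x. ut x t) < 28/25 * c1sq \<epsilon> * \<eta>"
      using t unfolding lyap_def by simp
  qed
qed

lemma eventually_bounded: "eventually_uniformly_bounded \<epsilon> f"
  unfolding eventually_uniformly_bounded_def
proof (intro allI impI)
  fix \<alpha> :: real
  assume "0 < \<alpha>"
  then obtain s \<eta> where "0 \<le> s" "0 < \<eta>" and bounded: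
    "\<And>t0 u ux uxx ut uxt uxxt utt t. s \<le> t0 \<Longrightarrow> is_solution \<epsilon> f t0 u ux uxx ut uxt uxxt utt \<Longrightarrow>
      dsol u ux uxx ut t0 \<le> \<alpha> \<Longrightarrow> t0 \<le> t \<Longrightarrow>
      lyapunov \<epsilon> (\<lambda>x. ux x t) (\<lambda>x. uxx x t) (\<lambda>x. ut x t) < 28/25 * c1sq \<epsilon> * \<eta>"
    by (rule lyap_uniformly_bounded) blast
  have "\<forall>t0 u ux uxx ut uxt uxxt utt. t0 \<ge> s \<longrightarrow> is_solution \<epsilon> f t0 u ux uxx ut uxt uxxt utt \<longrightarrow>
      dsol u ux uxx ut t0 \<le> \<alpha> \<longrightarrow> (\<forall>t\<ge>t0. dsol u ux uxx ut t < sqrt \<eta>)"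
  proof (intro allI impI)
    fix t0 u ux uxx ut uxt uxxt utt t
    assume hyps: "s \<le> t0" "is_solution \<epsilon> f t0 u ux uxx ut uxt uxxt utt"
      "dsol u ux uxx ut t0 \<le> \<alpha>" "t0 \<le> t"
    interpret setting_solution \<epsilon> f g g1 g2 \<sigma> t0 u ux uxx ut uxt uxxt utt
      using hyps \<open>0 \<le> s\<close> by (intro setting_solutionI) auto
    show "dsol u ux uxx ut t < sqrt \<eta>"
      using hyps bounded[OF hyps] by (intro dsol_less_sqrt) (auto simp: lyap_def)
  qed
  then show "\<exists>s\<ge>0. \<exists>\<beta>>0. \<forall>t0 u ux uxx ut uxt uxxt utt. t0 \<ge> s \<longrightarrow>
      is_solution \<epsilon> f t0 u ux uxx ut uxt uxxt utt \<longrightarrow>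
      dsol u ux uxx ut t0 \<le> \<alpha> \<longrightarrow> (\<forall>t\<ge>t0. dsol u ux uxx ut t < \<beta>)"
    using \<open>0 \<le> s\<close> \<open>0 < \<eta>\<close> real_sqrt_gt_zero by blast
qed

lemma eventually_stable: "eventually_quasi_uniform_asympt_stable_large \<epsilon> f"
  unfolding eventually_quasi_uniform_asympt_stable_large_def
proof (intro allI impI)
  fix \<alpha> :: real
  assume "0 < \<alpha>"
  then obtain s \<eta> where "0 \<le> s" "0 < \<eta>" and bounded:
    "\<And>t0 u ux uxx ut uxt uxxt utt t. s \<le> t0 \<Longrightarrow> is_solution \<epsilon> f t0 u ux uxx ut uxt uxxt utt \<Longrightarrow>
      dsol u ux uxx ut t0 \<le> \<alpha> \<Longrightarrow> t0 \<le> t \<Longrightarrow>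
      lyapunov \<epsilon> (\<lambda>x. ux x t) (\<lambda>x. uxx x t) (\<lambda>x. ut x t) < 28/25 * c1sq \<epsilon> * \<eta>"
    by (rule lyap_uniformly_bounded) blast
  define B where "B = 28/25 * c1sq \<epsilon> * \<eta>"
  have "0 < B"
    unfolding B_def using c1sq_bounds[OF eps] \<open>0 < \<eta>\<close> by simp
  have "\<exists>T>0. \<forall>t0 u ux uxx ut uxt uxxt utt. t0 \<ge> s \<longrightarrow> is_solution \<epsilon> f t0 u ux uxx ut uxt uxxt utt \<longrightarrow>
      dsol u ux uxx ut t0 \<le> \<alpha> \<longrightarrow> (\<forall>t\<ge>t0 + T. dsol u ux uxx ut t < \<rho>)" if "0 < \<rho>" for \<rho>
  proof -
    define r where "r = 28/25 * c1sq \<epsilon> * \<rho>^2"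
    have "0 < r"
      unfolding r_def using c1sq_bounds[OF eps] \<open>0 < \<rho>\<close> by simp
    obtain e m where e: "0 \<le> e" "0 \<le> m" "exp overshoot * (e / decay + e) = r / 2"
      and g1_le: "\<And>t. m \<le> t \<Longrightarrow> g1 t \<eta> \<le> e"
      and g2_int: "\<And>a b. m \<le> a \<Longrightarrow> a \<le> b \<Longrightarrow> integral {a..b} (\<lambda>t. g2 t \<eta>) \<le> e"
      using perturbations_eventually_small[OF \<open>0 < \<eta>\<close>, of "r / 2"] \<open>0 < r\<close> by auto
    obtain h where h: "m \<le> h" "0 < h" "exp overshoot * B * exp (- decay * h) \<le> r / 4"
      using exp_decay_below[of "exp overshoot * B" decay "r / 4"] \<open>0 < B\<close> \<open>0 < r\<close> decay_pos by auto
    show ?thesis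
    proof (intro exI[of _ "2 * h"] conjI allI impI)
      fix t0 u ux uxx ut uxt uxxt utt t
      assume hyps: "s \<le> t0" "is_solution \<epsilon> f t0 u ux uxx ut uxt uxxt utt"
        "dsol u ux uxx ut t0 \<le> \<alpha>" and t: "t0 + 2 * h \<le> t"
      interpret setting_solution \<epsilon> f g g1 g2 \<sigma> t0 u ux uxx ut uxt uxxt utt
        using hyps \<open>0 \<le> s\<close> by (intro setting_solutionI) auto
      have "lyap t \<le> exp overshoot * B * exp (- decay * h) + exp overshoot * (e / decay + e)"
        unfolding B_def using bounded[OF hyps] \<open>0 < \<eta>\<close> e g1_le g2_int t h t0_nonneg
        by (intro lyap_decay_from_bound) (auto simp: lyap_def)
      then have "lyap t < 28/25 * c1sq \<epsilon> * \<rho>^2"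
        using h(3) e(3) \<open>0 < r\<close> unfolding r_def by linarith
      then show "dsol u ux uxx ut t < \<rho>"
        using dsol_less_sqrt[of t "\<rho>^2"] t h \<open>0 < \<rho>\<close> by simp
    qed (use h in simp)
  qed
  then show "\<exists>s\<ge>0. \<forall>\<rho>>0. \<exists>T>0. \<forall>t0 u ux uxx ut uxt uxxt utt. t0 \<ge> s \<longrightarrow>
      is_solution \<epsilon> f t0 u ux uxx ut uxt uxxt utt \<longrightarrow>
      dsol u ux uxx ut t0 \<le> \<alpha> \<longrightarrow> (\<forall>t\<ge>t0 + T. dsol u ux uxx ut t < \<rho>)"
    using \<open>0 \<le> s\<close> by blast
qed

end

theorem theorem1:
  fixes \<epsilon> :: real
    and f :: "real \<Rightarrow> real \<Rightarrow> real \<Rightarrow> real \<Rightarrow> real \<Rightarrow> real \<Rightarrow> real"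
    and g :: "real \<Rightarrow> real"
    and g1 g2 :: "real \<Rightarrow> real \<Rightarrow> real"
  assumes eps: "\<epsilon> > 0"
    and f_cont: "continuous_on UNIV (\<lambda>(x, t, n, p, q, r). f x t n p q r)"
    and g_cont: "continuous_on {0..} g" and g_nonneg: "\<forall>t\<ge>0. g t \<ge> 0"
    and g1_cont: "continuous_on ({0..} \<times> {0<..}) (\<lambda>(t, \<eta>). g1 t \<eta>)"
    and g2_cont: "continuous_on ({0..} \<times> {0<..}) (\<lambda>(t, \<eta>). g2 t \<eta>)"
    and g1_nonneg: "\<forall>t\<ge>0. \<forall>\<eta>>0. g1 t \<eta> \<ge> 0"
    and g2_nonneg: "\<forall>t\<ge>0. \<forall>\<eta>>0. g2 t \<eta> \<ge> 0"
    and g1_mono: "\<forall>t\<ge>0. \<forall>a b. 0 < a \<longrightarrow> a \<le> b \<longrightarrow> g1 t a \<le> g1 t b"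
    and g2_mono: "\<forall>t\<ge>0. \<forall>a b. 0 < a \<longrightarrow> a \<le> b \<longrightarrow> g2 t a \<le> g2 t b"
    and f_bound: "\<forall>t\<ge>0. \<forall>\<phi> \<phi>' \<phi>'' \<psi>. in_Gamma \<phi> \<phi>' \<phi>'' \<psi> \<longrightarrow>
        (\<epsilon>/2 + 2/\<epsilon>) * integral {0..1} (\<lambda>x. (f x t (\<phi> x) (\<phi>' x) (\<phi>'' x) (\<psi> x))^2)
          \<le> g t * c1sq \<epsilon> * dsq \<phi> \<phi>' \<phi>'' \<psi> + g1 t (dsq \<phi> \<phi>' \<phi>'' \<psi>) + g2 t (dsq \<phi> \<phi>' \<phi>'' \<psi>)"
    and cond_i: "\<exists>\<sigma>>0. \<forall>t0 t. 0 \<le> t0 \<longrightarrow> t0 \<le> t \<longrightarrow>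
        integral {t0..t} g - pconst \<epsilon> * (t - t0) \<le> \<sigma>"
    and cond_ii_iii: "\<exists>chi kap q M \<xi>. 0 \<le> chi \<and> chi \<le> 1 \<and> 0 \<le> kap \<and> kap \<le> 1 \<and> q \<ge> 0 \<and>
        (chi = 1 \<longrightarrow> q < pconst \<epsilon>) \<and> M > 0 \<and>
        (\<forall>t\<ge>0. \<bar>integral {0..t} g / (1 + tpow t chi) - q\<bar> < M / (1 + tpow t kap)) \<and>
        (chi > kap \<longrightarrow> \<xi> > 0) \<and> (chi \<le> kap \<longrightarrow> \<xi> = 0) \<and>
        (\<forall>\<eta>>0. ((\<lambda>t. g1 t \<eta> * exp (\<xi> * (tpow t chi - tpow t kap))) \<longlongrightarrow> 0) at_top \<and>
                (\<lambda>\<tau>. g2 \<tau> \<eta> * exp (\<xi> * (tpow \<tau> chi - tpow \<tau> kap))) integrable_on {0..})"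
  shows "eventually_uniformly_bounded \<epsilon> f \<and> eventually_quasi_uniform_asympt_stable_large \<epsilon> f"
proof -
  obtain \<sigma> where \<sigma>: "\<forall>t0 t. 0 \<le> t0 \<longrightarrow> t0 \<le> t \<longrightarrow> integral {t0..t} g - pconst \<epsilon> * (t - t0) \<le> \<sigma>"
    using cond_i by blast
  obtain chi kap \<xi> where \<xi>: "chi > kap \<longrightarrow> \<xi> > 0" "chi \<le> kap \<longrightarrow> \<xi> = 0"
    and iii: "\<forall>\<eta>>0. ((\<lambda>t. g1 t \<eta> * exp (\<xi> * (tpow t chi - tpow t kap))) \<longlongrightarrow> 0) at_top \<and>
      (\<lambda>\<tau>. g2 \<tau> \<eta> * exp (\<xi> * (tpow \<tau> chi - tpow \<tau> kap))) integrable_on {0..}"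
    using cond_ii_iii by blast
  define w where "w t = exp (\<xi> * (tpow t chi - tpow t kap))" for t
  have w_ge: "1 \<le> w t" if "1 \<le> t" for t
    unfolding w_def using that \<xi> by (rule tpow_weight_ge_1)
  interpret stability_setting \<epsilon> f g g1 g2 \<sigma>
  proof unfold_locales
    fix \<eta> :: real
    assume "0 < \<eta>"
    then have "((\<lambda>t. g1 t \<eta> * w t) \<longlongrightarrow> 0) at_top"
      using iii unfolding w_def by blast
    then show "((\<lambda>t. g1 t \<eta>) \<longlongrightarrow> 0) at_top"
      by (rule tendsto_zero_of_weighted) (use w_ge g1_nonneg \<open>0 < \<eta>\<close> in auto)
  next
    fix \<eta> e :: real
    assume "0 < \<eta>" "0 < e"
    have "(\<lambda>t. g2 t \<eta> * w t) integrable_on {0..}"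
      using iii \<open>0 < \<eta>\<close> unfolding w_def by blast
    then show "\<exists>m. \<forall>a b. m \<le> a \<longrightarrow> a \<le> b \<longrightarrow> integral {a..b} (\<lambda>t. g2 t \<eta>) \<le> e"
    proof (rule weighted_integrable_tail_small)
      show "continuous_on {0..} (\<lambda>t. g2 t \<eta>)"
        using g2_cont by (rule continuous_on_slice) (use \<open>0 < \<eta>\<close> in simp)
    qed (use w_ge g2_nonneg \<open>0 < \<eta>\<close> \<open>0 < e\<close> in \<open>auto simp: w_def\<close>)
  qed (simp_all add: eps f_cont g_cont g_nonneg g1_cont g2_cont g1_nonneg g2_nonneg g1_mono g2_mono f_bound \<sigma>)
  show ?thesis
    using eventually_bounded eventually_stable by blast
qed

end
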